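(* Let $\alpha\in(1,2)$, let $f_k$ ($k\in\mathbb N$) be as in an admissible system, let $D_k:=\lfloor4^{\alpha k}\rfloor$, $\varphi_k:=\frac1{D_k}\sum_{j=0}^{D_k-1}f_k\circ T^j$ and $h_k:=f_k-\varphi_k$. Then $n^{-1/\alpha}\sum_{1\le k\le\frac1{2\alpha}\log n}S_n(h_k)\to0$ in probability (with respect to $m$) as $n\to\infty$.
   Context: $(\mathcal X,\mathcal B,m,T)$ is an ergodic, aperiodic probability preserving system; $\log$ is base $2$; $S_n(h):=\sum_{j=0}^{n-1}h\circ T^j$. $S_\alpha(\sigma,\beta,\mu)$ denotes the stable law with characteristic function $\exp\{-\sigma^\alpha|\theta|^\alpha(1-i\beta\,\mathrm{sign}(\theta)\tan(\pi\alpha/2))+i\mu\theta\}$ ($\alpha\neq1$). Triangular array: on $(\Omega,\mathcal F,\mathbb P)$ let $\{X_k(m):k,m\in\mathbb N\}$ be independent with $X_k(m)\sim S_\alpha(k^{-1/\alpha},1,0)$; $Y_k(m):=X_k(m)\mathbf 1_{[2^k\le X_k(m)\le4^k]}$; $Z_k(m):=\sum_{j=8^k}^{16^k}\frac{j}{4^k}\mathbf 1_{[j/4^k\le Y_k(m)<(j+1)/4^k]}$. Let $d_k:=4^{k^2}$. An admissible system is a sequence of measurable $f_k:\mathcal X\to\mathbb R$ such that the family $\{f_k\circ T^j:k\in\mathbb N,0\le j<2d_k\}$ has under $m$ the same joint distribution as $\{Z_k(j+1):k\in\mathbb N,0\le j<2d_k\}$, together with $g_k:=f_k\circ T^{d_k}$.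 *)

theory Defs
  imports "HOL-Probability.Probability"
begin

definition ergodic_aperiodic_pps :: "'a measure \<Rightarrow> ('a \<Rightarrow> 'a) \<Rightarrow> bool" where
  "ergodic_aperiodic_pps M T \<longleftrightarrow>
     prob_space M \<and> T \<in> measurable M M \<and> distr M M T = M \<and>
     (\<forall>A\<in>sets M. T -` A \<inter> space M = A \<longrightarrow> measure M A = 0 \<or> measure M A = 1) \<and>
     (AE x in M. \<forall>n::nat. n \<ge> 1 \<longrightarrow> (T ^^ n) x \<noteq> x)"

(* characteristic function of S_alpha(sigma,beta,mu), alpha \<noteq> 1 *)
definition stable_char :: "real \<Rightarrow> real \<Rightarrow> real \<Rightarrow> real \<Rightarrow> real \<Rightarrow> complex" where
  "stable_char \<alpha> \<sigma> \<beta> \<mu> \<theta> =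
     exp (- complex_of_real ((\<sigma> powr \<alpha>) * (\<bar>\<theta>\<bar> powr \<alpha>))
            * (1 - \<i> * complex_of_real (\<beta> * sgn \<theta> * tan (pi * \<alpha> / 2)))
          + \<i> * complex_of_real (\<mu> * \<theta>))"

definition has_stable_law ::
  "'b measure \<Rightarrow> ('b \<Rightarrow> real) \<Rightarrow> real \<Rightarrow> real \<Rightarrow> real \<Rightarrow> real \<Rightarrow> bool" where
  "has_stable_law P X \<alpha> \<sigma> \<beta> \<mu> \<longleftrightarrow>
     X \<in> borel_measurable P \<and> (\<forall>\<theta>. char (distr P borel X) \<theta> = stable_char \<alpha> \<sigma> \<beta> \<mu> \<theta>)"

definition Ytr :: "nat \<Rightarrow> real \<Rightarrow> real" where
  "Ytr k x = (if 2 ^ k \<le> x \<and> x \<le> 4 ^ k then x else 0)"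

definition Ztr :: "nat \<Rightarrow> real \<Rightarrow> real" where
  "Ztr k y = (\<Sum>j\<in>{8 ^ k .. 16 ^ k :: nat}.
      real j / 4 ^ k * (if real j / 4 ^ k \<le> y \<and> y < (real j + 1) / 4 ^ k then 1 else 0))"

definition dseq :: "nat \<Rightarrow> nat" where
  "dseq k = 4 ^ (k ^ 2)"

definition adm_index :: "(nat \<times> nat) set" where
  "adm_index = {(k, j). 1 \<le> k \<and> j < 2 * dseq k}"

(* (f_k) is an admissible system for (M,T), relative to the triangular array X on P:
   {f_k o T^j} under M has the same joint law as {Z_k(j+1)} under P *)
definition admissible ::
  "'a measure \<Rightarrow> ('a \<Rightarrow> 'a) \<Rightarrow> 'b measure \<Rightarrow> (nat \<Rightarrow> nat \<Rightarrow> 'b \<Rightarrow> real)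
     \<Rightarrow> (nat \<Rightarrow> 'a \<Rightarrow> real) \<Rightarrow> bool" where
  "admissible M T P X f \<longleftrightarrow>
     (\<forall>k. f k \<in> borel_measurable M) \<and>
     distr M (PiM adm_index (\<lambda>_. borel)) (\<lambda>x. \<lambda>i\<in>adm_index. f (fst i) ((T ^^ snd i) x))
     = distr P (PiM adm_index (\<lambda>_. borel))
         (\<lambda>\<omega>. \<lambda>i\<in>adm_index. Ztr (fst i) (Ytr (fst i) (X (fst i) (snd i + 1) \<omega>)))"

definition birkhoff_sum :: "('a \<Rightarrow> 'a) \<Rightarrow> nat \<Rightarrow> ('a \<Rightarrow> real) \<Rightarrow> 'a \<Rightarrow> real" where
  "birkhoff_sum T n h x = (\<Sum>j<n. h ((T ^^ j) x))"

definition tendsto_in_prob :: "'a measure \<Rightarrow> (nat \<Rightarrow> 'a \<Rightarrow> real) \<Rightarrow> real \<Rightarrow> bool" where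
  "tendsto_in_prob M Y c \<longleftrightarrow>
     (\<forall>\<epsilon>>0. (\<lambda>n. measure M {x \<in> space M. \<bar>Y n x - c\<bar> > \<epsilon>}) \<longlonglongrightarrow> 0)"

definition Dseq :: "real \<Rightarrow> nat \<Rightarrow> nat" where
  "Dseq \<alpha> k = nat \<lfloor>4 powr (\<alpha> * real k)\<rfloor>"

definition phi_seq :: "real \<Rightarrow> ('a \<Rightarrow> 'a) \<Rightarrow> (nat \<Rightarrow> 'a \<Rightarrow> real) \<Rightarrow> nat \<Rightarrow> 'a \<Rightarrow> real" where
  "phi_seq \<alpha> T f k x = (1 / real (Dseq \<alpha> k)) * (\<Sum>j<Dseq \<alpha> k. f k ((T ^^ j) x))"

definition h_seq :: "real \<Rightarrow> ('a \<Rightarrow> 'a) \<Rightarrow> (nat \<Rightarrow> 'a \<Rightarrow> real) \<Rightarrow> nat \<Rightarrow> 'a \<Rightarrow> real" where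
  "h_seq \<alpha> T f k x = f k x - phi_seq \<alpha> T f k x"

end

theory Submission
  imports Defs "HOL-Real_Asymp.Real_Asymp"
begin

(*
  Each h_k is a coboundary: S_n(h_k) = G_k - G_k o T^n, where G_k is the Cesaro mean of the
  Birkhoff sums S_j(f_k), j < D_k. For k >= 2 the window D_k is at most 2 d_k, so the f_k o T^j
  with j < D_k are independent copies of Z_k and E[S_n(h_k)^2] <= 4 D_k E[Z_k^2]. The tail of the
  stable law, obtained from its characteristic function by the truncation inequality, gives
  E[Z_k^2] = O(4^(k(2 - alpha))/k), hence E[S_n(h_k)^2] = O(16^k/k). Summing the L^1 norms over
  k <= N = log n/(2 alpha), where 4^N <= n^(1/alpha), the normalised sum has L^1 norm O(1/sqrt N),
  and Markov's inequality concludes.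
*)


section \<open>Truncated variables\<close>

lemma Ztr_eq_floor:
  "Ztr k y = (if 8^k \<le> \<lfloor>4^k*y\<rfloor> \<and> \<lfloor>4^k*y\<rfloor> \<le> 16^k then real_of_int \<lfloor>4^k*y\<rfloor> / 4^k else 0)"
proof -
  define z where "z = \<lfloor>(4::real)^k * y\<rfloor>"
  have cell: "(real j / 4^k \<le> y \<and> y < (real j + 1) / 4^k) \<longleftrightarrow> int j = z" for j :: nat
  proof -
    have "(real j / 4^k \<le> y \<and> y < (real j + 1) / 4^k) \<longleftrightarrow> (real j \<le> 4^k * y \<and> 4^k * y < real j + 1)"
      by (simp add: divide_le_eq less_divide_eq mult.commute)
    also have "\<dots> \<longleftrightarrow> int j = z"
      unfolding z_def by (metis floor_eq_iff of_int_of_nat_eq)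
    finally show ?thesis .
  qed
  have z0: "0 \<le> z" if "8^k \<le> z"
    using that zero_le_power[of "8::int" k] by linarith
  have cells: "{8^k..16^k} \<inter> {j. int j = z} = (if 8^k \<le> z \<and> z \<le> 16^k then {nat z} else {})"
    using z0 by (auto simp: le_nat_iff nat_le_iff)
  have "Ztr k y = (\<Sum>j\<in>{8^k..16^k}. if int j = z then real j / 4^k else 0)"
    unfolding Ztr_def by (intro sum.cong refl) (simp add: cell)
  also have "\<dots> = (\<Sum>j\<in>{8^k..16^k} \<inter> {j. int j = z}. real j / 4^k)"
    by (simp add: sum.inter_restrict)
  finally show ?thesis
    unfolding cells z_def[symmetric] using z0 by auto
qed

lemma Ztr_nonneg: "0 \<le> Ztr k y"
proof -
  define z where "z = \<lfloor>(4::real)^k * y\<rfloor>"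
  have "0 \<le> real_of_int z / 4^k" if "8^k \<le> z"
  proof -
    have "0 \<le> z" using that zero_le_power[of "8::int" k] by linarith
    then show ?thesis by simp
  qed
  then show ?thesis unfolding Ztr_eq_floor z_def[symmetric] by simp
qed

lemma Ztr_le_four_pow: "Ztr k y \<le> 4^k"
proof -
  define z where "z = \<lfloor>(4::real)^k*y\<rfloor>"
  have "z \<le> 16^k \<Longrightarrow> real_of_int z / 4^k \<le> 4^k"
  proof -
    assume "z \<le> 16^k"
    then have "real_of_int z \<le> 16^k"
      by (metis of_int_le_iff of_int_numeral of_int_power)
    also have "(16::real)^k = 4^k * 4^k" by (simp flip: power_mult_distrib)
    finally show ?thesis by (simp add: divide_le_eq)
  qed
  then show ?thesis unfolding Ztr_eq_floor z_def[symmetric] by simp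
qed

lemma Ztr_nonzeroD: assumes "Ztr k y \<noteq> 0" shows "2^k \<le> y" "Ztr k y \<le> y"
proof -
  define z where "z = \<lfloor>(4::real)^k*y\<rfloor>"
  have cond: "8^k \<le> z \<and> z \<le> 16^k"
  proof (rule ccontr)
    assume "\<not> (8^k \<le> z \<and> z \<le> 16^k)"
    then have "Ztr k y = 0" unfolding Ztr_eq_floor z_def[symmetric] by (simp only: if_False)
    with assms show False by simp
  qed
  have e: "Ztr k y = real_of_int z / 4^k"
    unfolding Ztr_eq_floor z_def[symmetric] using cond by (simp only: simp_thms if_True)
  have zl: "real_of_int z \<le> 4^k * y" unfolding z_def by (rule of_int_floor_le)
  have "real_of_int z / 4^k \<le> (4^k*y)/4^k" by (rule divide_right_mono[OF zl]) simp
  then show "Ztr k y \<le> y" using e by simp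
  have "real_of_int ((8::int)^k) \<le> real_of_int z" using cond by (simp only: of_int_le_iff)
  then have "(8::real)^k \<le> real_of_int z" by (simp only: of_int_power of_int_numeral)
  then have "(8::real)^k \<le> 4^k*y" using zl by (rule order_trans)
  then have "(4::real)^k * 2^k \<le> 4^k*y" by (simp flip: power_mult_distrib)
  then show "2^k \<le> y" by simp
qed

lemma Ztr_measurable[measurable]: "Ztr k \<in> borel_measurable borel"
  unfolding Ztr_def by measurable

lemma Ytr_measurable[measurable]: "Ytr k \<in> borel_measurable borel"
  unfolding Ytr_def by measurable

section \<open>Tails of stable laws\<close>

lemma integral_one_minus_cos:
  fixes x u :: real
  assumes "x \<noteq> 0" "0 \<le> u"
  shows "(LBINT t:{-u..u}. 1 - cos (t * x)) = 2 * u - 2 * sin (u * x) / x"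
proof -
  have "integral\<^sup>L lborel (\<lambda>t. indicator {-u..u} t *\<^sub>R (1 - cos (t * x))) =
        (u - sin (u * x) / x) - (-u - sin (-u * x) / x)"
  proof (rule integral_FTC_atLeastAtMost[where F="\<lambda>t::real. t - sin (t * x) / x"])
    show "-u \<le> u" using assms by simp
    show "((\<lambda>t. t - sin (t * x) / x) has_vector_derivative 1 - cos (t * x)) (at t within {-u..u})" for t
      using assms(1) by (auto intro!: derivative_eq_intros simp: has_real_derivative_iff_has_vector_derivative[symmetric] field_simps)
  qed (intro continuous_intros)
  then show ?thesis by (simp add: set_lebesgue_integral_def)
qed

lemma sinc_bounds:
  fixes u x :: real
  assumes u: "0 < u" and x: "x \<noteq> 0"
  shows "\<bar>sin (u * x) / x\<bar> \<le> u" and "2 / u \<le> \<bar>x\<bar> \<Longrightarrow> sin (u * x) / x \<le> u / 2"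
proof -
  have "\<bar>sin (u * x)\<bar> / \<bar>x\<bar> \<le> \<bar>u * x\<bar> / \<bar>x\<bar>"
    by (intro divide_right_mono abs_sin_x_le_abs_x) simp
  then show "\<bar>sin (u * x) / x\<bar> \<le> u" using x u by (simp add: abs_mult abs_divide)
  assume "2 / u \<le> \<bar>x\<bar>"
  then have "1 / \<bar>x\<bar> \<le> u / 2" using u x by (simp add: field_simps)
  moreover have "sin (u * x) / x \<le> \<bar>sin (u * x)\<bar> / \<bar>x\<bar>"
    by (metis abs_divide abs_ge_self)
  moreover have "\<bar>sin (u * x)\<bar> / \<bar>x\<bar> \<le> 1 / \<bar>x\<bar>"
    by (intro divide_right_mono abs_sin_le_one) simp
  ultimately show "sin (u * x) / x \<le> u / 2" by linarith
qed

lemma (in real_distribution) one_minus_Re_char: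
  "1 - Re (char M t) = (\<integral>x. 1 - cos (t * x) \<partial>M)"
proof -
  have "integrable M (\<lambda>x. iexp (t * x))" by (rule integrable_iexp) auto
  then have "Re (char M t) = (\<integral>x. Re (iexp (t * x)) \<partial>M)"
    unfolding char_def by (rule integral_Re[symmetric])
  also have "\<dots> = (\<integral>x. cos (t * x) \<partial>M)" by (simp add: Re_exp)
  moreover have "integrable M (\<lambda>x. cos (t * x))"
    by (rule integrable_const_bound[where B=1]) auto
  ultimately show ?thesis by (simp add: prob_space flip: space_eq_univ)
qed

lemma (in real_distribution) integral_one_minus_Re_char:
  assumes u: "0 < u"
  shows "(LBINT t:{-u..u}. 1 - Re (char M t)) = (\<integral>x. (LBINT t:{-u..u}. 1 - cos (t * x)) \<partial>M)"
proof -
  interpret pair_sigma_finite M lborel ..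
  have "integrable (M \<Otimes>\<^sub>M lborel) (\<lambda>p. indicator (UNIV \<times> {-u..u}) p *\<^sub>R (1 - cos (snd p * fst p)))"
  proof (rule integrableI_bounded_set_indicator[where B=2])
    show "emeasure (M \<Otimes>\<^sub>M lborel) (UNIV \<times> {-u..u}) < \<infinity>"
      using lborel.emeasure_pair_measure_Times[of UNIV M "{-u..u}"] u
      by (simp add: emeasure_space_1 flip: space_eq_univ events_eq_borel)
    show "UNIV \<times> {-u..u} \<in> sets (M \<Otimes>\<^sub>M lborel)"
      by (rule pair_measureI) (auto simp flip: space_eq_univ events_eq_borel)
  qed (auto simp: abs_le_iff)
  then have "integrable (M \<Otimes>\<^sub>M lborel) (\<lambda>(x, t). indicator {-u..u} t *\<^sub>R (1 - cos (t * x)))"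
    by (simp add: indicator_times split_beta')
  then show ?thesis
    unfolding one_minus_Re_char set_lebesgue_integral_def by (simp add: Fubini_integral[symmetric])
qed

lemma (in real_distribution) truncation_inequality:
  assumes u: "0 < u"
  shows "u * prob {x. 2 / u \<le> \<bar>x\<bar>} \<le> (LBINT t:{-u..u}. 1 - Re (char M t))"
proof -
  define s where "s x = sin (u * x) / x" for x
  define g where "g x = (if x = 0 then 0 else 2 * (u - s x))" for x :: real
  have g_eq: "(LBINT t:{-u..u}. 1 - cos (t * x)) = g x" for x
    using u by (simp add: g_def s_def integral_one_minus_cos)
  have s: "\<bar>s x\<bar> \<le> u" "2 / u \<le> \<bar>x\<bar> \<Longrightarrow> s x \<le> u / 2" if "x \<noteq> 0" for x
    unfolding s_def using sinc_bounds[OF u that] by auto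
  have g_lower: "u * indicator {x. 2 / u \<le> \<bar>x\<bar>} x \<le> g x" for x
    using u s[of x] by (auto simp: g_def indicator_def abs_le_iff)
  have g_upper: "\<bar>g x\<bar> \<le> 4 * u" for x
    using u s[of x] by (auto simp: g_def abs_le_iff)
  have "g \<in> borel_measurable borel"
    unfolding g_def[abs_def] s_def[abs_def] by measurable
  then have "integrable M g"
    using g_upper by (intro integrable_const_bound[where B="4 * u"])
      (auto simp: measurable_cong_sets[OF events_eq_borel refl])
  moreover have "{x. 2 / u \<le> \<bar>x\<bar>} \<in> events"
    unfolding events_eq_borel by measurable
  then have "integrable M (\<lambda>x. u * indicator {x. 2 / u \<le> \<bar>x\<bar>} x)"
    by (intro integrable_mult_right integrable_real_indicator) (auto simp: emeasure_eq_measure)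
  ultimately have "(\<integral>x. u * indicator {x. 2 / u \<le> \<bar>x\<bar>} x \<partial>M) \<le> (\<integral>x. g x \<partial>M)"
    using g_lower by (intro integral_mono)
  then show ?thesis
    by (simp add: integral_one_minus_Re_char[OF u] g_eq measure_def)
qed

lemma norm_one_minus_stable_char_le:
  assumes a: "0 < \<alpha>" and s: "0 < \<sigma>"
  shows "cmod (1 - stable_char \<alpha> \<sigma> 1 0 t) \<le> (1 + \<bar>tan (pi * \<alpha> / 2)\<bar>) * (\<sigma> powr \<alpha> * \<bar>t\<bar> powr \<alpha>)"
proof -
  define S where "S = \<sigma> powr \<alpha> * \<bar>t\<bar> powr \<alpha>"
  define c where "c = sgn t * tan (pi * \<alpha> / 2)"
  have S0: "0 \<le> S" unfolding S_def by simp
  have e: "stable_char \<alpha> \<sigma> 1 0 t = exp (complex_of_real (-S)) * iexp (S * c)"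
    unfolding stable_char_def S_def c_def
    by (simp add: exp_add[symmetric] algebra_simps)
  have "1 - stable_char \<alpha> \<sigma> 1 0 t = complex_of_real (1 - exp (-S)) + complex_of_real (exp (-S)) * (1 - iexp (S*c))"
    unfolding e by (simp add: algebra_simps) (metis exp_of_real of_real_minus)
  then have "cmod (1 - stable_char \<alpha> \<sigma> 1 0 t) \<le> cmod (complex_of_real (1 - exp (-S))) + cmod (complex_of_real (exp (-S)) * (1 - iexp (S*c)))"
    by (metis norm_triangle_ineq)
  also have "cmod (complex_of_real (1 - exp (-S))) = 1 - exp (-S)"
  proof -
    have "exp (-S) \<le> 1" using S0 by simp
    then show ?thesis by (simp only: norm_of_real abs_of_nonneg diff_ge_0_iff_ge)
  qed
  also have "1 - exp (-S) \<le> S" using exp_ge_add_one_self[of "-S"] by simp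
  also have "cmod (complex_of_real (exp (-S)) * (1 - iexp (S*c))) = exp (-S) * cmod (1 - iexp (S*c))"
    by (simp add: norm_mult)
  also have "\<dots> \<le> 1 * \<bar>S*c\<bar>"
  proof (rule mult_mono)
    show "exp (-S) \<le> 1" using S0 by simp
    have "cmod (iexp (S*c) - 1) \<le> \<bar>S*c\<bar>" using iexp_approx1[of "S*c" 0] by simp
    then show "cmod (1 - iexp (S*c)) \<le> \<bar>S*c\<bar>" by (simp add: norm_minus_commute)
  qed auto
  also have "\<bar>S*c\<bar> \<le> S * \<bar>tan (pi * \<alpha> / 2)\<bar>"
    using S0 unfolding c_def by (auto simp: abs_mult sgn_if)
  finally show ?thesis unfolding S_def by (simp add: algebra_simps)
qed

lemma stable_tail_le:
  assumes mu: "real_distribution \<mu>" and ch: "\<And>\<theta>. char \<mu> \<theta> = stable_char \<alpha> \<sigma> 1 0 \<theta>"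
    and a: "0 < \<alpha>" and s: "0 < \<sigma>" and x: "0 < x"
  shows "measure \<mu> {y. x \<le> \<bar>y\<bar>}
           \<le> 2 * (1 + \<bar>tan (pi * \<alpha> / 2)\<bar>) * 2 powr \<alpha> * \<sigma> powr \<alpha> * x powr (-\<alpha>)"
proof -
  interpret real_distribution \<mu> by fact
  define u where "u = 2 / x"
  define B where "B = (1 + \<bar>tan (pi * \<alpha> / 2)\<bar>) * (\<sigma> powr \<alpha> * u powr \<alpha>)"
  have u: "0 < u" using x unfolding u_def by simp
  have "u * prob {y. 2 / u \<le> \<bar>y\<bar>} \<le> (LBINT t:{-u..u}. 1 - Re (char \<mu> t))"
    by (rule truncation_inequality[OF u])
  also have "\<dots> \<le> (LBINT t:{-u..u}. B)"
  proof (rule set_integral_mono)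
    show "set_integrable lborel {-u..u} (\<lambda>t. 1 - Re (char \<mu> t))"
      by (intro borel_integrable_atLeastAtMost' continuous_at_imp_continuous_on ballI
          continuous_intros isCont_char)
    show "set_integrable lborel {-u..u} (\<lambda>t. B)"
      by (intro borel_integrable_atLeastAtMost' continuous_on_const)
    fix t assume t: "t \<in> {-u..u}"
    have "1 - Re (char \<mu> t) \<le> cmod (1 - char \<mu> t)"
      using complex_Re_le_cmod[of "1 - char \<mu> t"] by simp
    also have "\<dots> \<le> (1 + \<bar>tan (pi * \<alpha> / 2)\<bar>) * (\<sigma> powr \<alpha> * \<bar>t\<bar> powr \<alpha>)"
      unfolding ch by (rule norm_one_minus_stable_char_le[OF a s])
    also have "\<dots> \<le> B"
      unfolding B_def using t a by (intro mult_left_mono powr_mono2) auto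
    finally show "1 - Re (char \<mu> t) \<le> B" .
  qed
  also have "(LBINT t:{-u..u}. B) = u * (2 * B)"
    using u by (simp add: set_integral_const)
  finally have "prob {y. x \<le> \<bar>y\<bar>} \<le> 2 * B"
    using u by (simp add: u_def divide_le_cancel)
  moreover have "u powr \<alpha> = 2 powr \<alpha> * x powr (-\<alpha>)"
    using x unfolding u_def by (simp add: powr_divide powr_minus_divide)
  ultimately show ?thesis unfolding B_def by (simp add: algebra_simps)
qed

lemma sq_le_dyadic_tail_sum:
  fixes x :: real
  assumes x: "2^k \<le> x" "x \<le> 4^k"
  shows "x^2 \<le> (\<Sum>l\<in>{k..2*k}. 4^(l+1) * indicator {y. 2^l \<le> \<bar>y\<bar>} x)"
proof -
  define L where "L = Max {l\<in>{k..2*k}. (2::real)^l \<le> x}"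
  have fin: "finite {l\<in>{k..2*k}. (2::real)^l \<le> x}" by simp
  have "k \<in> {l\<in>{k..2*k}. (2::real)^l \<le> x}" using x(1) by simp
  then have L: "L \<in> {k..2*k}" "2^L \<le> x"
    using Max_in[OF fin] unfolding L_def by blast+
  have Lmax: "l \<le> L" if "l \<in> {k..2*k}" "2^l \<le> x" for l
    unfolding L_def using fin that by (intro Max_ge) auto
  have x0: "0 \<le> x" using x(1) by (smt (verit) zero_le_power)
  have "x^2 \<le> 4^(L+1)"
  proof (cases "L = 2*k")
    case True
    have "x^2 \<le> (4^k)^2" using x(2) x0 by (rule power_mono)
    also have "\<dots> \<le> 4^(L+1)" using True by (simp add: power_mult[symmetric] mult.commute)
    finally show ?thesis .
  next
    case False
    then have "x < 2^(L+1)" using L Lmax[of "L+1"] by fastforce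
    then have "x^2 \<le> (2^(L+1))^2" using x0 by (intro power_mono) auto
    also have "\<dots> = 4^(L+1)" by (simp add: power2_eq_square flip: power_mult_distrib)
    finally show ?thesis .
  qed
  also have "\<dots> = 4^(L+1) * indicator {y. 2^L \<le> \<bar>y\<bar>} x"
    using L x0 by (simp add: indicator_def)
  also have "\<dots> \<le> (\<Sum>l\<in>{k..2*k}. 4^(l+1) * indicator {y. 2^l \<le> \<bar>y\<bar>} x)"
    using L by (intro member_le_sum) auto
  finally show ?thesis .
qed
lemma Ztr_Ytr_sq_le_tail_sum:
  "(Ztr k (Ytr k x))^2 \<le> (\<Sum>l\<in>{k..2*k}. 4^(l+1) * indicator {y. 2^l \<le> \<bar>y\<bar>} x)"
proof (cases "Ztr k (Ytr k x) = 0")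
  case False
  then have Y: "2^k \<le> Ytr k x" "Ztr k (Ytr k x) \<le> Ytr k x" by (auto dest: Ztr_nonzeroD)
  moreover have "(0::real) < 2^k" by simp
  ultimately have "Ytr k x \<noteq> 0" by linarith
  then have x: "Ytr k x = x" "2^k \<le> x" "x \<le> 4^k"
    unfolding Ytr_def by (auto split: if_splits)
  have "(Ztr k (Ytr k x))^2 \<le> x^2"
    using Y x Ztr_nonneg[of k "Ytr k x"] by (intro power_mono) auto
  also have "\<dots> \<le> (\<Sum>l\<in>{k..2*k}. 4^(l+1) * indicator {y. 2^l \<le> \<bar>y\<bar>} x)"
    using x by (intro sq_le_dyadic_tail_sum)
  finally show ?thesis .
qed (simp add: sum_nonneg)

lemma integral_Ztr_Ytr_sq_le_tail_sum:
  assumes P: "prob_space P" and xi: "\<xi> \<in> borel_measurable P"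
  shows "(\<integral>\<omega>. (Ztr k (Ytr k (\<xi> \<omega>)))^2 \<partial>P)
           \<le> (\<Sum>l\<in>{k..2*k}. 4^(l+1) * measure (distr P borel \<xi>) {y. 2^l \<le> \<bar>y\<bar>})"
proof -
  interpret prob_space P by fact
  have tail_int: "integrable P (\<lambda>\<omega>. indicator {y. 2^l \<le> \<bar>y\<bar>} (\<xi> \<omega>) :: real)" for l :: nat
    by (rule integrable_const_bound[where B=1]) (use xi in \<open>auto split: split_indicator\<close>)
  have tail_eq: "(\<integral>\<omega>. indicator {y. 2^l \<le> \<bar>y\<bar>} (\<xi> \<omega>) \<partial>P) = measure (distr P borel \<xi>) {y. 2^l \<le> \<bar>y\<bar>}"
    for l :: nat
    by (subst integral_distr[OF xi, symmetric]) auto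
  have "(\<integral>\<omega>. (Ztr k (Ytr k (\<xi> \<omega>)))^2 \<partial>P) \<le>
      (\<integral>\<omega>. (\<Sum>l\<in>{k..2*k}. 4^(l+1) * indicator {y. 2^l \<le> \<bar>y\<bar>} (\<xi> \<omega>)) \<partial>P)"
  proof (rule integral_mono)
    show "integrable P (\<lambda>\<omega>. (Ztr k (Ytr k (\<xi> \<omega>)))^2)"
      by (rule integrable_const_bound[where B="(4^k)^2"])
         (use xi Ztr_nonneg Ztr_le_four_pow in \<open>auto intro!: power_mono\<close>)
    show "integrable P (\<lambda>\<omega>. \<Sum>l\<in>{k..2*k}. (4::real)^(l+1) * indicator {y. 2^l \<le> \<bar>y\<bar>} (\<xi> \<omega>))"
      by (intro Bochner_Integration.integrable_sum Bochner_Integration.integrable_mult_right tail_int)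
  qed (rule Ztr_Ytr_sq_le_tail_sum)
  also have "\<dots> = (\<Sum>l\<in>{k..2*k}. 4^(l+1) * measure (distr P borel \<xi>) {y. 2^l \<le> \<bar>y\<bar>})"
    by (subst Bochner_Integration.integral_sum) (auto intro!: tail_int simp: tail_eq)
  finally show ?thesis .
qed

lemma sum_atLeastAtMost_power_le:
  fixes q :: real
  assumes "1 < q"
  shows "(\<Sum>l\<in>{m..n}. q^l) \<le> q^(n+1) / (q - 1)"
proof -
  have "(\<Sum>l\<in>{m..n}. q^l) \<le> (\<Sum>l<n+1. q^l)"
    using assms by (intro sum_mono2) auto
  also have "\<dots> = (q^(n+1) - 1) / (q - 1)"
    using assms by (intro geometric_sum) simp
  also have "\<dots> \<le> q^(n+1) / (q - 1)"
    using assms by (intro divide_right_mono) auto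
  finally show ?thesis .
qed

lemma sum_dyadic_weights_le:
  fixes \<alpha> :: real
  assumes a: "\<alpha> < 2"
  shows "(\<Sum>l\<in>{k..2*k}. 4^(l+1) * ((2::real)^l) powr (-\<alpha>))
           \<le> 4 * 2 powr (2 - \<alpha>) / (2 powr (2 - \<alpha>) - 1) * 4 powr (real k * (2 - \<alpha>))"
proof -
  define q where "q = 2 powr (2 - \<alpha>)"
  have q1: "1 < q" unfolding q_def using a by simp
  have weight: "(4::real)^(l+1) * ((2::real)^l) powr (-\<alpha>) = 4 * q^l" for l :: nat
  proof -
    have "(4::real)^l = 2 ^ (2 * l)"
      by (simp add: power_mult)
    then have "(4::real)^l = 2 powr real (2 * l)"
      by (simp only: powr_realpow zero_less_numeral)
    moreover have "((2::real)^l) powr (-\<alpha>) = 2 powr (real l * (-\<alpha>))"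
      by (simp add: powr_realpow[symmetric] powr_powr)
    ultimately show ?thesis
      unfolding q_def by (simp add: powr_power powr_add[symmetric] algebra_simps)
  qed
  have "q^(2*k) = 2 powr (2 * (real k * (2 - \<alpha>)))"
    unfolding q_def by (simp add: powr_power algebra_simps)
  also have "\<dots> = 4 powr (real k * (2 - \<alpha>))"
    by (simp only: powr_powr[symmetric]) simp
  finally have q2k: "q^(2*k+1) = q * 4 powr (real k * (2 - \<alpha>))" by simp
  have "(\<Sum>l\<in>{k..2*k}. 4^(l+1) * ((2::real)^l) powr (-\<alpha>)) = 4 * (\<Sum>l\<in>{k..2*k}. q^l)"
    unfolding weight by (simp add: sum_distrib_left)
  also have "\<dots> \<le> 4 * (q^(2*k+1) / (q - 1))"
    by (intro mult_left_mono sum_atLeastAtMost_power_le q1) simp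
  finally show ?thesis unfolding q2k q_def[symmetric] by (simp add: algebra_simps)
qed

lemma truncated_stable_second_moment:
  assumes a: "1 < \<alpha>" "\<alpha> < 2"
  obtains K where "\<And>(P :: 'b measure) \<xi> k. prob_space P \<Longrightarrow>
    has_stable_law P \<xi> \<alpha> (real k powr (-1 / \<alpha>)) 1 0 \<Longrightarrow> 1 \<le> k \<Longrightarrow>
    (\<integral>\<omega>. (Ztr k (Ytr k (\<xi> \<omega>)))^2 \<partial>P) \<le> K * 4 powr (real k * (2 - \<alpha>)) / real k"
proof
  define A where "A = 2 * (1 + \<bar>tan (pi * \<alpha> / 2)\<bar>) * 2 powr \<alpha>"
  define W where "W = 4 * 2 powr (2 - \<alpha>) / (2 powr (2 - \<alpha>) - 1)"
  fix P :: "'b measure" and \<xi> k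
  assume P: "prob_space P" and law: "has_stable_law P \<xi> \<alpha> (real k powr (-1 / \<alpha>)) 1 0" and k: "1 \<le> k"
  define \<mu> where "\<mu> = distr P borel \<xi>"
  have xi: "\<xi> \<in> borel_measurable P" using law unfolding has_stable_law_def by simp
  have mu: "real_distribution \<mu>"
    unfolding \<mu>_def using xi prob_space.real_distribution_distr[OF P] by simp
  have scale: "(real k powr (-1 / \<alpha>)) powr \<alpha> = 1 / real k"
  proof -
    have "(real k powr (-1 / \<alpha>)) powr \<alpha> = real k powr (-1 / \<alpha> * \<alpha>)" by (rule powr_powr)
    then show ?thesis using a k by (simp add: powr_minus_divide)
  qed
  have tail: "measure \<mu> {y. 2^l \<le> \<bar>y\<bar>} \<le> A / real k * ((2::real)^l) powr (-\<alpha>)" for l :: nat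
    using stable_tail_le[OF mu _ _ _, of \<alpha> "real k powr (-1 / \<alpha>)" "2^l"] law a k
    unfolding has_stable_law_def \<mu>_def A_def scale by (simp add: algebra_simps add_divide_distrib)
  have "(\<integral>\<omega>. (Ztr k (Ytr k (\<xi> \<omega>)))^2 \<partial>P) \<le> (\<Sum>l\<in>{k..2*k}. 4^(l+1) * measure \<mu> {y. 2^l \<le> \<bar>y\<bar>})"
    unfolding \<mu>_def by (rule integral_Ztr_Ytr_sq_le_tail_sum[OF P xi])
  also have "\<dots> \<le> (\<Sum>l\<in>{k..2*k}. 4^(l+1) * (A / real k * ((2::real)^l) powr (-\<alpha>)))"
    by (intro sum_mono mult_left_mono tail) simp
  also have "\<dots> = A / real k * (\<Sum>l\<in>{k..2*k}. 4^(l+1) * ((2::real)^l) powr (-\<alpha>))"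
    by (simp add: sum_distrib_left algebra_simps)
  also have "\<dots> \<le> A / real k * (W * 4 powr (real k * (2 - \<alpha>)))"
    unfolding W_def using a by (intro mult_left_mono sum_dyadic_weights_le) (auto simp: A_def)
  finally show "(\<integral>\<omega>. (Ztr k (Ytr k (\<xi> \<omega>)))^2 \<partial>P) \<le> A * W * 4 powr (real k * (2 - \<alpha>)) / real k"
    by simp
qed

section \<open>Coboundary estimates\<close>

lemma distr_funpow_eq:
  assumes T: "T \<in> measurable M M" and inv: "distr M M T = M"
  shows "distr M M (T^^n) = M"
proof (induction n)
  case (Suc n)
  have "distr M M (T^^Suc n) = distr (distr M M T) M (T^^n)"
    unfolding funpow_Suc_right by (rule distr_distr[symmetric]) (use T measurable_compose_n[OF T] in auto)
  also have "\<dots> = M" using inv Suc by simp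
  finally show ?case .
qed simp

lemma ergodic_aperiodic_ppsD:
  assumes "ergodic_aperiodic_pps M T"
  shows "prob_space M" "T \<in> measurable M M" "distr M M T = M"
  using assms unfolding ergodic_aperiodic_pps_def by auto

definition ae_bounded :: "'a measure \<Rightarrow> ('a \<Rightarrow> real) \<Rightarrow> bool" where
  "ae_bounded M g \<longleftrightarrow> g \<in> borel_measurable M \<and> (\<exists>B. AE x in M. \<bar>g x\<bar> \<le> B)"

lemma ae_bounded_const[simp]: "ae_bounded M (\<lambda>x. c)"
  unfolding ae_bounded_def by (auto intro!: exI[of _ "\<bar>c\<bar>"])

lemma ae_bounded_add: "ae_bounded M f \<Longrightarrow> ae_bounded M g \<Longrightarrow> ae_bounded M (\<lambda>x. f x + g x)"
  unfolding ae_bounded_def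
proof (elim conjE exE, intro conjI)
  fix B C assume "AE x in M. \<bar>f x\<bar> \<le> B" "AE x in M. \<bar>g x\<bar> \<le> C"
  then show "\<exists>B. AE x in M. \<bar>f x + g x\<bar> \<le> B"
    by (intro exI[of _ "B + C"]) (auto elim!: eventually_elim2)
qed auto

lemma ae_bounded_diff: "ae_bounded M f \<Longrightarrow> ae_bounded M g \<Longrightarrow> ae_bounded M (\<lambda>x. f x - g x)"
  unfolding ae_bounded_def
proof (elim conjE exE, intro conjI)
  fix B C assume "AE x in M. \<bar>f x\<bar> \<le> B" "AE x in M. \<bar>g x\<bar> \<le> C"
  then show "\<exists>B. AE x in M. \<bar>f x - g x\<bar> \<le> B"
    by (intro exI[of _ "B + C"]) (auto elim!: eventually_elim2)
qed auto

lemma ae_bounded_mult: "ae_bounded M f \<Longrightarrow> ae_bounded M g \<Longrightarrow> ae_bounded M (\<lambda>x. f x * g x)"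
  unfolding ae_bounded_def
proof (elim conjE exE, intro conjI)
  fix B C assume "AE x in M. \<bar>f x\<bar> \<le> B" "AE x in M. \<bar>g x\<bar> \<le> C"
  then show "\<exists>B. AE x in M. \<bar>f x * g x\<bar> \<le> B"
  proof (intro exI[of _ "B * C"])
    assume "AE x in M. \<bar>f x\<bar> \<le> B" "AE x in M. \<bar>g x\<bar> \<le> C"
    then show "AE x in M. \<bar>f x * g x\<bar> \<le> B * C"
    proof (eventually_elim)
      case (elim x)
      then show ?case unfolding abs_mult by (intro mult_mono) auto
    qed
  qed
qed auto

lemma ae_bounded_sum: "(\<And>i. i \<in> I \<Longrightarrow> ae_bounded M (f i)) \<Longrightarrow> ae_bounded M (\<lambda>x. \<Sum>i\<in>I. f i x)"
proof (induction I rule: infinite_finite_induct)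
  case (insert i I)
  then show ?case by (simp add: ae_bounded_add)
qed simp_all

lemma ae_bounded_power2: "ae_bounded M f \<Longrightarrow> ae_bounded M (\<lambda>x. (f x)^2)"
  unfolding power2_eq_square by (rule ae_bounded_mult)

lemma ae_bounded_abs: "ae_bounded M f \<Longrightarrow> ae_bounded M (\<lambda>x. \<bar>f x\<bar>)"
  unfolding ae_bounded_def by auto

lemma ae_bounded_cmult: "ae_bounded M f \<Longrightarrow> ae_bounded M (\<lambda>x. c * f x)"
  using ae_bounded_mult[OF ae_bounded_const] .

lemma ae_bounded_integrable: assumes "finite_measure M" "ae_bounded M f" shows "integrable M f"
proof -
  obtain B where f: "f \<in> borel_measurable M" and B: "AE x in M. \<bar>f x\<bar> \<le> B"
    using assms(2) unfolding ae_bounded_def by auto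
  have "AE x in M. norm (f x) \<le> B" using B by simp
  then show ?thesis using finite_measure.integrable_const_bound[OF assms(1)] f by blast
qed

lemma ae_bounded_compose:
  assumes "S \<in> measurable M M" "distr M M S = M" "ae_bounded M f"
  shows "ae_bounded M (\<lambda>x. f (S x))"
proof -
  obtain B where f: "f \<in> borel_measurable M" and B: "AE x in M. \<bar>f x\<bar> \<le> B"
    using assms(3) unfolding ae_bounded_def by auto
  have "AE x in distr M M S. \<bar>f x\<bar> \<le> B" unfolding assms(2) by (rule B)
  then have "AE x in M. \<bar>f (S x)\<bar> \<le> B"
    by (subst (asm) AE_distr_iff) (use assms(1) f in auto)
  moreover have "(\<lambda>x. f (S x)) \<in> borel_measurable M"
    using assms(1) f by measurable
  ultimately show ?thesis unfolding ae_bounded_def by auto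
qed

lemma integral_distr_invariant:
  fixes f :: "'a \<Rightarrow> real"
  assumes "S \<in> measurable M M" "distr M M S = M" "f \<in> borel_measurable M"
  shows "(\<integral>x. f (S x) \<partial>M) = (\<integral>x. f x \<partial>M)"
proof -
  have "(\<integral>x. f (S x) \<partial>M) = (\<integral>x. f x \<partial>distr M M S)"
  proof -
    have "integral\<^sup>L (distr M M S) f = (\<integral>x. f (S x) \<partial>M)"
      by (rule integral_distr) (use assms in auto)
    then show ?thesis by simp
  qed
  then show ?thesis using assms(2) by simp
qed

lemma integral_abs_le_sqrt_integral_sq:
  assumes "prob_space M" "integrable M g" "integrable M (\<lambda>x. (g x)^2)"
  shows "(\<integral>x. \<bar>g x\<bar> \<partial>M) \<le> sqrt (\<integral>x. (g x)^2 \<partial>M)"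
proof -
  interpret prob_space M by fact
  have i1: "integrable M (\<lambda>x. \<bar>g x\<bar>)" using assms(2) by simp
  have i2: "integrable M (\<lambda>x. (\<bar>g x\<bar>)^2)" using assms(3) by simp
  have "0 \<le> variance (\<lambda>x. \<bar>g x\<bar>)" by (simp add: integral_nonneg)
  also have "variance (\<lambda>x. \<bar>g x\<bar>) = (\<integral>x. (\<bar>g x\<bar>)^2 \<partial>M) - (\<integral>x. \<bar>g x\<bar> \<partial>M)^2"
    by (rule variance_eq[OF i1 i2])
  finally have "(\<integral>x. \<bar>g x\<bar> \<partial>M)^2 \<le> (\<integral>x. (g x)^2 \<partial>M)" by simp
  then show ?thesis using real_le_rsqrt by blast
qed

lemma sum_lessThan_shift:
  fixes a :: "nat \<Rightarrow> real"
  shows "(\<Sum>l<n. a (l + j)) = (\<Sum>l<n. a l) - (\<Sum>i<j. a i) + (\<Sum>i<j. a (n + i))"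
proof (induction j)
  case 0 then show ?case by simp
next
  case (Suc j)
  have s: "(\<Sum>l<n. a (Suc l + j)) = (\<Sum>l<n. a (l + j)) - a j + a (n + j)"
  proof -
    have "(\<Sum>l<Suc n. a (l + j)) = a j + (\<Sum>l<n. a (Suc l + j))"
      by (subst sum.lessThan_Suc_shift) simp
    moreover have "(\<Sum>l<Suc n. a (l + j)) = (\<Sum>l<n. a (l + j)) + a (n + j)" by simp
    ultimately show ?thesis by simp
  qed
  have "(\<Sum>l<n. a (l + Suc j)) = (\<Sum>l<n. a (Suc l + j))" by simp
  also have "\<dots> = (\<Sum>l<n. a (l + j)) - a j + a (n + j)" by (rule s)
  also have "\<dots> = (\<Sum>l<n. a l) - (\<Sum>i<Suc j. a i) + (\<Sum>i<Suc j. a (n + i))"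
    using Suc by simp
  finally show ?case .
qed

definition cesaro_potential :: "real \<Rightarrow> ('a \<Rightarrow> 'a) \<Rightarrow> (nat \<Rightarrow> 'a \<Rightarrow> real) \<Rightarrow> nat \<Rightarrow> 'a \<Rightarrow> real" where
  "cesaro_potential \<alpha> T f k x = (1 / real (Dseq \<alpha> k)) * (\<Sum>j<Dseq \<alpha> k. birkhoff_sum T j (f k) x)"

lemma birkhoff_sum_h_seq_eq:
  assumes D: "Dseq \<alpha> k > 0"
  shows "birkhoff_sum T n (h_seq \<alpha> T f k) x = cesaro_potential \<alpha> T f k x - cesaro_potential \<alpha> T f k ((T^^n) x)"
proof -
  define D where "D = Dseq \<alpha> k"
  define a where "a l = f k ((T^^l) x)" for l
  have D0: "real D > 0" using D unfolding D_def by simp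
  have comp: "(T^^j) ((T^^l) x) = (T^^(l + j)) x" for j l
    by (simp add: funpow_add add.commute)
  have "birkhoff_sum T n (h_seq \<alpha> T f k) x = (\<Sum>l<n. a l - (1 / real D) * (\<Sum>j<D. a (l + j)))"
    unfolding birkhoff_sum_def h_seq_def phi_seq_def D_def[symmetric] a_def comp ..
  also have "\<dots> = (\<Sum>l<n. a l) - (1 / real D) * (\<Sum>j<D. \<Sum>l<n. a (l + j))"
    by (simp add: sum_subtractf sum_distrib_left sum.swap[of _ "{..<n}"])
  also have "(\<Sum>j<D. \<Sum>l<n. a (l + j)) = (\<Sum>j<D. (\<Sum>l<n. a l) - (\<Sum>i<j. a i) + (\<Sum>i<j. a (n + i)))"
    by (intro sum.cong refl sum_lessThan_shift)
  also have "\<dots> = real D * (\<Sum>l<n. a l) - (\<Sum>j<D. \<Sum>i<j. a i) + (\<Sum>j<D. \<Sum>i<j. a (n + i))"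
    by (simp add: sum.distrib sum_subtractf)
  also have "(\<Sum>l<n. a l) - (1 / real D) * (real D * (\<Sum>l<n. a l) - (\<Sum>j<D. \<Sum>i<j. a i) + (\<Sum>j<D. \<Sum>i<j. a (n + i)))
      = (1 / real D) * (\<Sum>j<D. \<Sum>i<j. a i) - (1 / real D) * (\<Sum>j<D. \<Sum>i<j. a (n + i))"
    using D0 by (simp add: field_simps)
  also have "(\<Sum>j<D. \<Sum>i<j. a (n + i)) = (\<Sum>j<D. \<Sum>i<j. f k ((T^^i) ((T^^n) x)))"
    unfolding a_def comp by (simp add: add.commute)
  finally show ?thesis unfolding cesaro_potential_def birkhoff_sum_def D_def[symmetric] a_def by simp
qed

lemma integral_sq_sum_uncorrelated:
  fixes Z :: "nat \<Rightarrow> 'a \<Rightarrow> real"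
  assumes fin: "finite_measure M" and b: "\<And>i. ae_bounded M (Z i)"
    and unc: "\<And>i i'. i < j \<Longrightarrow> i' < j \<Longrightarrow> i \<noteq> i' \<Longrightarrow> (\<integral>x. Z i x * Z i' x \<partial>M) = 0"
  shows "(\<integral>x. (\<Sum>i<j. Z i x)^2 \<partial>M) = (\<Sum>i<j. \<integral>x. (Z i x)^2 \<partial>M)"
proof -
  have "(\<integral>x. (\<Sum>i<j. Z i x)^2 \<partial>M) = (\<integral>x. (\<Sum>i<j. \<Sum>i'<j. Z i x * Z i' x) \<partial>M)"
    by (simp add: power2_eq_square sum_product)
  also have "\<dots> = (\<Sum>i<j. \<Sum>i'<j. \<integral>x. Z i x * Z i' x \<partial>M)"
    by (simp add: Bochner_Integration.integral_sum ae_bounded_integrable[OF fin] ae_bounded_mult b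
        ae_bounded_sum Bochner_Integration.integrable_sum)
  also have "\<dots> = (\<Sum>i<j. \<Sum>i'<j. if i = i' then \<integral>x. (Z i x)^2 \<partial>M else 0)"
    by (intro sum.cong refl) (auto simp: unc power2_eq_square)
  finally show ?thesis by simp
qed

lemma integral_sq_sum_centered:
  fixes F :: "nat \<Rightarrow> 'a \<Rightarrow> real"
  assumes P: "prob_space M"
    and bF: "\<And>i. ae_bounded M (F i)"
    and mean: "\<And>i. (\<integral>x. F i x \<partial>M) = \<mu>"
    and sq: "\<And>i. (\<integral>x. (F i x)^2 \<partial>M) = s2"
    and unc: "\<And>i i'. i < j \<Longrightarrow> i' < j \<Longrightarrow> i \<noteq> i' \<Longrightarrow> (\<integral>x. F i x * F i' x \<partial>M) = \<mu>^2"
  shows "(\<integral>x. (\<Sum>i<j. F i x - \<mu>)^2 \<partial>M) = real j * (s2 - \<mu>^2)"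
proof -
  interpret prob_space M by fact
  have fin: "finite_measure M" by unfold_locales
  have bZ: "ae_bounded M (\<lambda>x. F i x - \<mu>)" for i by (intro ae_bounded_diff bF ae_bounded_const)
  have int: "integrable M (F i)" "integrable M (\<lambda>x. F i x * F i' x)" for i i'
    by (intro ae_bounded_integrable[OF fin] bF ae_bounded_mult)+
  have cross: "(\<integral>x. (F i x - \<mu>) * (F i' x - \<mu>) \<partial>M) = (\<integral>x. F i x * F i' x \<partial>M) - \<mu>^2" for i i'
  proof -
    have "(\<integral>x. (F i x - \<mu>) * (F i' x - \<mu>) \<partial>M) = (\<integral>x. F i x * F i' x - \<mu> * F i x - \<mu> * F i' x + \<mu>^2 \<partial>M)"
      by (intro Bochner_Integration.integral_cong refl) (simp add: algebra_simps power2_eq_square)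
    also have "\<dots> = (\<integral>x. F i x * F i' x \<partial>M) - \<mu>^2"
      using int by (simp add: mean prob_space power2_eq_square)
    finally show ?thesis .
  qed
  have "(\<integral>x. (\<Sum>i<j. F i x - \<mu>)^2 \<partial>M) = (\<Sum>i<j. \<integral>x. (F i x - \<mu>)^2 \<partial>M)"
    using unc by (intro integral_sq_sum_uncorrelated[OF fin bZ]) (simp add: cross)
  also have "\<dots> = real j * (s2 - \<mu>^2)"
    using cross sq by (simp add: power2_eq_square)
  finally show ?thesis .
qed

lemma integral_cesaro_centered_sq_le:
  fixes F :: "nat \<Rightarrow> 'a \<Rightarrow> real"
  assumes P: "prob_space M" and D: "0 < D"
    and bF: "\<And>i. ae_bounded M (F i)"
    and mean: "\<And>i. (\<integral>x. F i x \<partial>M) = \<mu>"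
    and sq: "\<And>i. (\<integral>x. (F i x)^2 \<partial>M) = s2"
    and unc: "\<And>i i'. i < D \<Longrightarrow> i' < D \<Longrightarrow> i \<noteq> i' \<Longrightarrow> (\<integral>x. F i x * F i' x \<partial>M) = \<mu>^2"
  shows "(\<integral>x. ((1 / real D) * (\<Sum>j<D. \<Sum>i<j. F i x - \<mu>))^2 \<partial>M) \<le> real D * s2"
proof -
  interpret prob_space M by fact
  have fin: "finite_measure M" by unfold_locales
  define Y where "Y j x = (\<Sum>i<j. F i x - \<mu>)" for j x
  have bY: "ae_bounded M (Y j)" for j unfolding Y_def by (intro ae_bounded_sum ae_bounded_diff bF ae_bounded_const)
  have EY: "(\<integral>x. (Y j x)^2 \<partial>M) = real j * (s2 - \<mu>^2)" if "j \<le> D" for j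
    unfolding Y_def using that by (intro integral_sq_sum_centered[OF P bF mean sq unc]) auto
  have "0 \<le> (\<integral>x. (Y 1 x)^2 \<partial>M)" by (simp add: integral_nonneg)
  moreover have "(\<integral>x. (Y 1 x)^2 \<partial>M) = s2 - \<mu>^2" using D EY[of 1] by simp
  ultimately have "0 \<le> s2 - \<mu>^2" by linarith
  then have EY_le: "(\<integral>x. (Y j x)^2 \<partial>M) \<le> real D * s2" if "j \<le> D" for j
    using that EY[OF that] by (simp add: mult_mono order_trans[OF _ zero_le_power2])
  have "(\<integral>x. ((1 / real D) * (\<Sum>j<D. Y j x))^2 \<partial>M) \<le> (\<integral>x. (1 / real D) * (\<Sum>j<D. (Y j x)^2) \<partial>M)"
  proof (intro integral_mono ae_bounded_integrable[OF fin] ae_bounded_power2 ae_bounded_cmult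
      ae_bounded_sum bY)
    show "((1 / real D) * (\<Sum>j<D. Y j x))^2 \<le> (1 / real D) * (\<Sum>j<D. (Y j x)^2)" for x
      using sum_squared_le_sum_of_squares[of "\<lambda>j. Y j x" "{..<D}"] D
      by (simp add: power2_eq_square field_simps)
  qed
  also have "\<dots> = (1 / real D) * (\<Sum>j<D. \<integral>x. (Y j x)^2 \<partial>M)"
    by (simp add: Bochner_Integration.integral_sum ae_bounded_integrable[OF fin] ae_bounded_power2 bY)
  also have "\<dots> \<le> (1 / real D) * (\<Sum>j<D. real D * s2)"
    by (intro mult_left_mono sum_mono EY_le) auto
  also have "\<dots> = real D * s2" using D by simp
  finally show ?thesis unfolding Y_def .
qed

lemma integral_sq_sub_compose_le:
  fixes G :: "'a \<Rightarrow> real"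
  assumes P: "prob_space M" and S: "S \<in> measurable M M" "distr M M S = M" and G: "ae_bounded M G"
  shows "(\<integral>x. (G x - G (S x))^2 \<partial>M) \<le> 4 * (\<integral>x. (G x - c)^2 \<partial>M)"
proof -
  interpret prob_space M by fact
  have fin: "finite_measure M" by unfold_locales
  have Gc: "ae_bounded M (\<lambda>x. (G x - c)^2)" by (intro ae_bounded_power2 ae_bounded_diff G ae_bounded_const)
  have GcS: "ae_bounded M (\<lambda>x. (G (S x) - c)^2)" by (rule ae_bounded_compose[OF S Gc])
  have "(\<integral>x. (G x - G (S x))^2 \<partial>M) \<le> (\<integral>x. 2 * (G x - c)^2 + 2 * (G (S x) - c)^2 \<partial>M)"
  proof (intro integral_mono ae_bounded_integrable[OF fin] ae_bounded_power2 ae_bounded_diff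
      ae_bounded_add ae_bounded_cmult ae_bounded_const G Gc GcS ae_bounded_compose[OF S G])
    show "(G x - G (S x))^2 \<le> 2 * (G x - c)^2 + 2 * (G (S x) - c)^2" for x
      using zero_le_power2[of "(G x - c) + (G (S x) - c)"] by (simp add: power2_eq_square algebra_simps)
  qed
  also have "\<dots> = 2 * (\<integral>x. (G x - c)^2 \<partial>M) + 2 * (\<integral>x. (G (S x) - c)^2 \<partial>M)"
    using ae_bounded_integrable[OF fin Gc] ae_bounded_integrable[OF fin GcS] by simp
  also have "(\<integral>x. (G (S x) - c)^2 \<partial>M) = (\<integral>x. (G x - c)^2 \<partial>M)"
    using Gc unfolding ae_bounded_def by (intro integral_distr_invariant[OF S]) auto
  finally show ?thesis by simp
qed

lemma cesaro_potential_bounds: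
  assumes f: "\<And>j. 0 \<le> f k ((T^^j) x) \<and> f k ((T^^j) x) \<le> B" and D: "0 < Dseq \<alpha> k"
  shows "0 \<le> cesaro_potential \<alpha> T f k x" "cesaro_potential \<alpha> T f k x \<le> real (Dseq \<alpha> k) * B"
proof -
  define D where "D = Dseq \<alpha> k"
  have B: "0 \<le> B" using f[of 0] by linarith
  have S: "0 \<le> birkhoff_sum T j (f k) x \<and> birkhoff_sum T j (f k) x \<le> real D * B" if "j < D" for j
  proof
    show "0 \<le> birkhoff_sum T j (f k) x" unfolding birkhoff_sum_def using f by (intro sum_nonneg) auto
    have "birkhoff_sum T j (f k) x \<le> real j * B"
      unfolding birkhoff_sum_def using sum_mono[of "{..<j}" "\<lambda>i. f k ((T^^i) x)" "\<lambda>_. B"] f by simp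
    also have "\<dots> \<le> real D * B" using that B by (intro mult_right_mono) auto
    finally show "birkhoff_sum T j (f k) x \<le> real D * B" .
  qed
  have "0 \<le> (\<Sum>j<D. birkhoff_sum T j (f k) x)" "(\<Sum>j<D. birkhoff_sum T j (f k) x) \<le> real D * (real D * B)"
    using sum_mono[of "{..<D}" "\<lambda>j. birkhoff_sum T j (f k) x" "\<lambda>_. real D * B"] S
    by (auto intro: sum_nonneg)
  then show "0 \<le> cesaro_potential \<alpha> T f k x" "cesaro_potential \<alpha> T f k x \<le> real (Dseq \<alpha> k) * B"
    using D unfolding cesaro_potential_def D_def[symmetric] by (auto simp: field_simps)
qed

lemma cesaro_potential_measurable:
  assumes T: "T \<in> measurable M M" and fk: "f k \<in> borel_measurable M"
  shows "cesaro_potential \<alpha> T f k \<in> borel_measurable M"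
  unfolding cesaro_potential_def birkhoff_sum_def using measurable_compose_n[OF T] fk by measurable

lemma integral_birkhoff_sum_h_seq_sq_le_crude:
  assumes M: "prob_space M" and T: "T \<in> measurable M M" and fk: "f k \<in> borel_measurable M"
    and AEB: "AE x in M. \<forall>j. 0 \<le> f k ((T^^j) x) \<and> f k ((T^^j) x) \<le> B"
    and D: "0 < Dseq \<alpha> k"
  shows "(\<integral>x. (birkhoff_sum T n (h_seq \<alpha> T f k) x)^2 \<partial>M) \<le> (real (Dseq \<alpha> k) * B)^2"
proof -
  interpret prob_space M by fact
  define G where "G = cesaro_potential \<alpha> T f k"
  have "AE x in M. (birkhoff_sum T n (h_seq \<alpha> T f k) x)^2 \<le> (real (Dseq \<alpha> k) * B)^2"
    using AEB
  proof eventually_elim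
    case (elim x)
    moreover have "(T^^j) ((T^^n) x) = (T^^(j + n)) x" for j
      by (simp add: funpow_add)
    ultimately have "\<forall>j. 0 \<le> f k ((T^^j) ((T^^n) x)) \<and> f k ((T^^j) ((T^^n) x)) \<le> B"
      by simp
    then have "\<bar>G x - G ((T^^n) x)\<bar> \<le> real (Dseq \<alpha> k) * B"
      using cesaro_potential_bounds[OF _ D, where x=x and T=T and f=f and B=B]
        cesaro_potential_bounds[OF _ D, where x="(T^^n) x" and T=T and f=f and B=B] elim
      unfolding G_def by (simp add: abs_le_iff)
    then show ?case unfolding birkhoff_sum_h_seq_eq[OF D] G_def[symmetric]
      by (metis abs_ge_zero power2_abs power_mono)
  qed
  moreover have "(\<lambda>x. (birkhoff_sum T n (h_seq \<alpha> T f k) x)^2) \<in> borel_measurable M"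
    unfolding birkhoff_sum_h_seq_eq[OF D] using cesaro_potential_measurable[of T M f k \<alpha>, OF T fk] measurable_compose_n[OF T]
    by measurable
  ultimately have "(\<integral>x. (birkhoff_sum T n (h_seq \<alpha> T f k) x)^2 \<partial>M) \<le> (\<integral>x. (real (Dseq \<alpha> k) * B)^2 \<partial>M)"
    by (intro integral_mono_AE integrable_const_bound[where B="(real (Dseq \<alpha> k) * B)^2"]) auto
  then show ?thesis by (simp add: prob_space)
qed

lemma integral_birkhoff_sum_h_seq_sq_le:
  assumes M: "prob_space M" and T: "T \<in> measurable M M" and inv: "distr M M T = M"
    and fk: "f k \<in> borel_measurable M"
    and AEB: "AE x in M. \<forall>j. 0 \<le> f k ((T^^j) x) \<and> f k ((T^^j) x) \<le> B"
    and D: "0 < Dseq \<alpha> k"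
    and unc: "\<And>i i'. i < Dseq \<alpha> k \<Longrightarrow> i' < Dseq \<alpha> k \<Longrightarrow> i \<noteq> i' \<Longrightarrow>
       (\<integral>x. f k ((T^^i) x) * f k ((T^^i') x) \<partial>M) = (\<integral>x. f k x \<partial>M)^2"
  shows "(\<integral>x. (birkhoff_sum T n (h_seq \<alpha> T f k) x)^2 \<partial>M) \<le> 4 * real (Dseq \<alpha> k) * (\<integral>x. (f k x)^2 \<partial>M)"
proof -
  note Tn = measurable_compose_n[OF T] and inv_n = distr_funpow_eq[OF T inv]
  define D where "D = Dseq \<alpha> k"
  define F where "F i x = f k ((T^^i) x)" for i x
  define \<mu> where "\<mu> = (\<integral>x. f k x \<partial>M)"
  define G where "G = cesaro_potential \<alpha> T f k"
  define c where "c = (1 / real D) * (\<Sum>j<D. real j * \<mu>)"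
  have bF: "ae_bounded M (F i)" for i
    unfolding ae_bounded_def F_def using Tn[of i] fk AEB
    by (auto intro!: exI[of _ B] elim!: eventually_mono)
  have G_sub_c: "G x - c = (1 / real D) * (\<Sum>j<D. \<Sum>i<j. F i x - \<mu>)" for x
    unfolding G_def c_def cesaro_potential_def birkhoff_sum_def F_def D_def
    by (simp add: sum_subtractf right_diff_distrib)
  have bG: "ae_bounded M G"
    unfolding G_def cesaro_potential_def[abs_def] birkhoff_sum_def F_def[symmetric]
    by (intro ae_bounded_cmult ae_bounded_sum bF)
  have "(\<integral>x. (birkhoff_sum T n (h_seq \<alpha> T f k) x)^2 \<partial>M) = (\<integral>x. (G x - G ((T^^n) x))^2 \<partial>M)"
    unfolding birkhoff_sum_h_seq_eq[OF D] G_def ..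
  also have "\<dots> \<le> 4 * (\<integral>x. (G x - c)^2 \<partial>M)"
    by (rule integral_sq_sub_compose_le[OF M Tn inv_n bG])
  also have "(\<integral>x. (G x - c)^2 \<partial>M) \<le> real D * (\<integral>x. (f k x)^2 \<partial>M)"
    unfolding G_sub_c
  proof (rule integral_cesaro_centered_sq_le[OF M _ bF])
    show "(\<integral>x. F i x \<partial>M) = \<mu>" for i
      unfolding F_def \<mu>_def by (rule integral_distr_invariant[OF Tn inv_n fk])
    show "(\<integral>x. (F i x)^2 \<partial>M) = (\<integral>x. (f k x)^2 \<partial>M)" for i
      unfolding F_def by (rule integral_distr_invariant[OF Tn inv_n]) (use fk in measurable)
  qed (use D unc in \<open>auto simp: D_def F_def \<mu>_def\<close>)
  finally show ?thesis unfolding D_def by simp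
qed

section \<open>Scales\<close>

lemma Dseq_pos:
  assumes "0 < \<alpha>"
  shows "0 < Dseq \<alpha> k"
proof -
  have "1 \<le> 4 powr (\<alpha> * real k)" using assms by (intro ge_one_powr_ge_zero) auto
  then show ?thesis unfolding Dseq_def by (simp add: one_le_floor)
qed

lemma Dseq_le: "real (Dseq \<alpha> k) \<le> 4 powr (\<alpha> * real k)"
  unfolding Dseq_def by simp

lemma Dseq_le_two_dseq:
  assumes "\<alpha> \<le> 2" and "2 \<le> k"
  shows "Dseq \<alpha> k \<le> 2 * dseq k"
proof -
  have "\<alpha> * real k \<le> 2 * real k" using assms(1) by (intro mult_right_mono) auto
  then have "4 powr (\<alpha> * real k) \<le> 4 powr (2 * real k)" by (rule powr_mono) simp
  then have "real (Dseq \<alpha> k) \<le> 4 powr (2 * real k)" using Dseq_le[of \<alpha> k] by linarith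
  also have "\<dots> = 4 ^ (2 * k)" by (simp add: powr_realpow[symmetric])
  also have "(4::real) ^ (2 * k) \<le> 4 ^ (k^2)"
    using assms(2) by (intro power_increasing) (auto simp: power2_eq_square)
  also have "\<dots> = real (dseq k)" unfolding dseq_def by simp
  finally show ?thesis by linarith
qed

lemma sum_four_pow_div_sqrt_le:
  assumes "1 \<le> N"
  shows "(\<Sum>k\<in>{1..N}. 4^k / sqrt (real k)) \<le> 2 * 4^N / sqrt (real N)"
  using assms
proof (induction N rule: dec_induct)
  case base then show ?case by simp
next
  case (step N)
  have N1: "1 \<le> real N" using step.hyps by simp
  have key: "2 * 4^N / sqrt (real N) \<le> 4^(Suc N) / sqrt (real (Suc N))"
  proof -
    have "sqrt (real N + 1) \<le> sqrt (4 * real N)" using N1 by (intro real_sqrt_le_mono) simp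
    also have "\<dots> = 2 * sqrt (real N)" by (simp add: real_sqrt_mult)
    finally have s: "sqrt (real N + 1) \<le> 2 * sqrt (real N)" .
    have p1: "0 < sqrt (real N)" using N1 by simp
    have p2: "0 < sqrt (real N + 1)" using N1 by simp
    have "2 * 4^N * sqrt (real N + 1) \<le> 2 * 4^N * (2 * sqrt (real N))"
      using s by (intro mult_left_mono) auto
    then have "2 * 4^N * sqrt (real N + 1) \<le> 4^(Suc N) * sqrt (real N)" by simp
    then show ?thesis using p1 p2 by (simp add: divide_simps add.commute)
  qed
  have "(\<Sum>k\<in>{1..Suc N}. 4^k / sqrt (real k)) = (\<Sum>k\<in>{1..N}. 4^k / sqrt (real k)) + 4^(Suc N) / sqrt (real (Suc N))"
    using step.hyps by (simp add: sum.atLeast_Suc_atMost_Suc_shift sum.cl_ivl_Suc)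
  also have "\<dots> \<le> 2 * 4^N / sqrt (real N) + 4^(Suc N) / sqrt (real (Suc N))"
    using step.IH by simp
  also have "\<dots> \<le> 2 * 4^(Suc N) / sqrt (real (Suc N))" using key by simp
  finally show ?case .
qed

lemma Collect_le_real_eq_atLeastAtMost:
  "{k. 1 \<le> k \<and> real k \<le> L} = {1..nat \<lfloor>L\<rfloor>}"
proof (intro set_eqI iffI)
  fix k assume "k \<in> {k. 1 \<le> k \<and> real k \<le> L}"
  then have k: "1 \<le> k" "real k \<le> L" by auto
  then have "int k \<le> \<lfloor>L\<rfloor>" by (simp add: le_floor_iff)
  then show "k \<in> {1..nat \<lfloor>L\<rfloor>}" using k by auto
next
  fix k assume "k \<in> {1..nat \<lfloor>L\<rfloor>}"
  then have k: "1 \<le> k" "k \<le> nat \<lfloor>L\<rfloor>" by auto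
  then have "int k \<le> \<lfloor>L\<rfloor>" by linarith
  then have "real_of_int (int k) \<le> L" by (simp only: le_floor_iff)
  then have "real k \<le> L" by simp
  then show "k \<in> {k. 1 \<le> k \<and> real k \<le> L}" using k by auto
qed

lemma four_pow_nat_floor_log_le:
  assumes a: "0 < \<alpha>" and n: "1 \<le> n"
  shows "(4::real) ^ (nat \<lfloor>log 2 (real n) / (2 * \<alpha>)\<rfloor>) \<le> real n powr (1 / \<alpha>)"
proof -
  define L where "L = log 2 (real n) / (2 * \<alpha>)"
  have L0: "0 \<le> L" unfolding L_def using a n by simp
  have "(4::real) ^ (nat \<lfloor>L\<rfloor>) = 4 powr (real (nat \<lfloor>L\<rfloor>))" by (simp add: powr_realpow)
  also have "\<dots> \<le> 4 powr L" using L0 by (intro powr_mono) auto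
  also have "4 powr L = (2 powr 2) powr L" by simp
  also have "\<dots> = (2 powr (log 2 (real n))) powr (1 / \<alpha>)" unfolding powr_powr L_def using a by simp
  also have "\<dots> = real n powr (1 / \<alpha>)" using n by simp
  finally show ?thesis unfolding L_def .
qed

lemma filterlim_nat_floor_log_at_top:
  assumes a: "0 < \<alpha>"
  shows "filterlim (\<lambda>n::nat. real (nat \<lfloor>log 2 (real n) / (2 * \<alpha>)\<rfloor>)) at_top sequentially"
proof (rule filterlim_at_top_mono)
  show "filterlim (\<lambda>n::nat. log 2 (real n) / (2 * \<alpha>) - 1) at_top sequentially"
    using a by real_asymp
  show "\<forall>\<^sub>F n in sequentially. log 2 (real n) / (2 * \<alpha>) - 1 \<le> real (nat \<lfloor>log 2 (real n) / (2 * \<alpha>)\<rfloor>)"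
  proof (intro always_eventually allI)
    fix n :: nat
    define L where "L = log 2 (real n) / (2 * \<alpha>)"
    have "L - 1 \<le> real_of_int \<lfloor>L\<rfloor>" by linarith
    also have "\<dots> \<le> real (nat \<lfloor>L\<rfloor>)" by linarith
    finally show "L - 1 \<le> real (nat \<lfloor>L\<rfloor>)" .
  qed
qed

section \<open>The admissible system\<close>

lemma tendsto_in_prob_if_eventually_le:
  assumes "\<And>\<epsilon>. 0 < \<epsilon> \<Longrightarrow> g \<epsilon> \<longlonglongrightarrow> 0"
    and "\<And>\<epsilon>. 0 < \<epsilon> \<Longrightarrow> eventually (\<lambda>n. measure M {x \<in> space M. \<bar>Y n x - c\<bar> > \<epsilon>} \<le> g \<epsilon> n) sequentially"
  shows "tendsto_in_prob M Y c"
  unfolding tendsto_in_prob_def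
proof (intro allI impI)
  fix \<epsilon> :: real assume "0 < \<epsilon>"
  show "(\<lambda>n. measure M {x \<in> space M. \<bar>Y n x - c\<bar> > \<epsilon>}) \<longlonglongrightarrow> 0"
    by (rule tendsto_sandwich[OF _ assms(2) tendsto_const assms(1)]) (simp_all add: \<open>0 < \<epsilon>\<close>)
qed

locale admissible_stable_system =
  fixes M :: "'a measure" and T :: "'a \<Rightarrow> 'a"
    and P :: "'b measure" and X :: "nat \<Rightarrow> nat \<Rightarrow> 'b \<Rightarrow> real"
    and f :: "nat \<Rightarrow> 'a \<Rightarrow> real" and \<alpha> :: real
  assumes sys: "ergodic_aperiodic_pps M T"
    and alpha: "1 < \<alpha>" "\<alpha> < 2"
    and P: "prob_space P"
    and indep: "prob_space.indep_vars P (\<lambda>_. borel) (\<lambda>(k, m). X k m) {(k, m). 1 \<le> k \<and> 1 \<le> m}"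
    and laws: "\<And>k m. 1 \<le> k \<Longrightarrow> 1 \<le> m \<Longrightarrow> has_stable_law P (X k m) \<alpha> (real k powr (-1 / \<alpha>)) 1 0"
    and adm: "admissible M T P X f"
begin

lemma X_measurable[measurable]: "1 \<le> k \<Longrightarrow> 1 \<le> m \<Longrightarrow> X k m \<in> borel_measurable P"
  using laws unfolding has_stable_law_def by auto

lemma f_measurable[measurable]: "f k \<in> borel_measurable M"
  using adm unfolding admissible_def by auto

lemma T_measurable[measurable]: "T \<in> measurable M M"
  using ergodic_aperiodic_ppsD[OF sys] by simp

lemma distr_T_funpow: "distr M M (T^^n) = M"
  using ergodic_aperiodic_ppsD[OF sys] by (intro distr_funpow_eq) auto

lemma integral_funpow_eq:
  fixes g :: "'a \<Rightarrow> real"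
  assumes "g \<in> borel_measurable M"
  shows "(\<integral>x. g ((T^^n) x) \<partial>M) = (\<integral>x. g x \<partial>M)"
  by (rule integral_distr_invariant[OF measurable_compose_n[OF T_measurable] distr_T_funpow assms])

abbreviation Z :: "nat \<Rightarrow> nat \<Rightarrow> 'b \<Rightarrow> real" where
  "Z k m \<omega> \<equiv> Ztr k (Ytr k (X k m \<omega>))"

definition "\<Phi> x = (\<lambda>i\<in>adm_index. f (fst i) ((T ^^ snd i) x))"
definition "\<Psi> \<omega> = (\<lambda>i\<in>adm_index. Z (fst i) (snd i + 1) \<omega>)"
abbreviation "PI \<equiv> PiM adm_index (\<lambda>_. borel :: real measure)"

lemma \<Phi>_measurable: "\<Phi> \<in> measurable M PI"
  unfolding \<Phi>_def[abs_def]
  by (rule measurable_restrict) (use measurable_compose_n[OF T_measurable] in measurable)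

lemma \<Psi>_measurable: "\<Psi> \<in> measurable P PI"
  unfolding \<Psi>_def[abs_def]
proof (rule measurable_restrict)
  fix i assume "i \<in> adm_index"
  then have "1 \<le> fst i" unfolding adm_index_def by auto
  then show "(\<lambda>\<omega>. Z (fst i) (snd i + 1) \<omega>) \<in> borel_measurable P"
    using X_measurable[of "fst i" "snd i + 1"] by measurable
qed

lemma distr_\<Phi>_eq_distr_\<Psi>: "distr M PI \<Phi> = distr P PI \<Psi>"
  using adm unfolding admissible_def \<Phi>_def[abs_def] \<Psi>_def[abs_def] by simp

lemma integral_\<Phi>_eq_integral_\<Psi>:
  fixes g :: "((nat \<times> nat) \<Rightarrow> real) \<Rightarrow> real"
  assumes g: "g \<in> borel_measurable PI"
  shows "(\<integral>x. g (\<Phi> x) \<partial>M) = (\<integral>\<omega>. g (\<Psi> \<omega>) \<partial>P)"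
  using integral_distr[OF \<Phi>_measurable g] integral_distr[OF \<Psi>_measurable g]
  by (simp add: distr_\<Phi>_eq_distr_\<Psi>)

lemma AE_\<Phi>_iff_AE_\<Psi>:
  assumes Q: "{\<omega> \<in> space PI. Q \<omega>} \<in> sets PI"
  shows "(AE x in M. Q (\<Phi> x)) \<longleftrightarrow> (AE \<omega> in P. Q (\<Psi> \<omega>))"
  using AE_distr_iff[OF \<Phi>_measurable Q] AE_distr_iff[OF \<Psi>_measurable Q]
  unfolding distr_\<Phi>_eq_distr_\<Psi> by simp

lemma adm_index_mem: "1 \<le> k \<Longrightarrow> j < 2 * dseq k \<Longrightarrow> (k, j) \<in> adm_index"
  unfolding adm_index_def by simp

lemma \<Phi>_apply: "1 \<le> k \<Longrightarrow> j < 2 * dseq k \<Longrightarrow> \<Phi> x (k, j) = f k ((T^^j) x)"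
  using adm_index_mem unfolding \<Phi>_def by simp

lemma \<Psi>_apply: "1 \<le> k \<Longrightarrow> j < 2 * dseq k \<Longrightarrow> \<Psi> \<omega> (k, j) = Z k (j + 1) \<omega>"
  using adm_index_mem unfolding \<Psi>_def by simp

lemma dseq_pos: "0 < dseq k"
  unfolding dseq_def by simp

lemma AE_f_funpow_range:
  assumes k: "1 \<le> k"
  shows "AE x in M. \<forall>j. 0 \<le> f k ((T^^j) x) \<and> f k ((T^^j) x) \<le> 4^k"
proof -
  have mem: "(k, 0) \<in> adm_index" using adm_index_mem[OF k] dseq_pos by simp
  have "AE x in M. 0 \<le> \<Phi> x (k, 0) \<and> \<Phi> x (k, 0) \<le> 4^k"
  proof (subst AE_\<Phi>_iff_AE_\<Psi>)
    show "{\<omega> \<in> space PI. 0 \<le> \<omega> (k, 0) \<and> \<omega> (k, 0) \<le> 4^k} \<in> sets PI"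
      using mem by measurable
    show "AE \<omega> in P. 0 \<le> \<Psi> \<omega> (k, 0) \<and> \<Psi> \<omega> (k, 0) \<le> 4^k"
      using mem by (simp add: \<Psi>_def Ztr_nonneg Ztr_le_four_pow)
  qed
  then have range: "AE x in M. 0 \<le> f k x \<and> f k x \<le> 4^k"
    using mem by (simp add: \<Phi>_def)
  have "AE x in M. 0 \<le> f k ((T^^j) x) \<and> f k ((T^^j) x) \<le> 4^k" for j
  proof -
    have "AE x in distr M M (T^^j). 0 \<le> f k x \<and> f k x \<le> 4^k"
      unfolding distr_T_funpow by (rule range)
    then show ?thesis
      by (subst (asm) AE_distr_iff) (use measurable_compose_n[OF T_measurable] in measurable)
  qed
  then show ?thesis by (simp add: AE_all_countable)
qed

lemma integral_f_funpow_eq_integral_Z: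
  fixes g :: "real \<Rightarrow> real"
  assumes k: "1 \<le> k" and j: "j < 2 * dseq k" and g: "g \<in> borel_measurable borel"
  shows "(\<integral>x. g (f k ((T^^j) x)) \<partial>M) = (\<integral>\<omega>. g (Z k (j + 1) \<omega>) \<partial>P)"
  using integral_\<Phi>_eq_integral_\<Psi>[of "\<lambda>\<omega>. g (\<omega> (k, j))"] adm_index_mem[OF k j] g
  by (simp add: \<Phi>_apply[OF k j] \<Psi>_apply[OF k j])

lemma integral_f_funpow_mult_eq_integral_Z:
  assumes k: "1 \<le> k" and j: "j < 2 * dseq k" and j': "j' < 2 * dseq k"
  shows "(\<integral>x. f k ((T^^j) x) * f k ((T^^j') x) \<partial>M) = (\<integral>\<omega>. Z k (j + 1) \<omega> * Z k (j' + 1) \<omega> \<partial>P)"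
  using integral_\<Phi>_eq_integral_\<Psi>[of "\<lambda>\<omega>. \<omega> (k, j) * \<omega> (k, j')"] adm_index_mem[OF k j] adm_index_mem[OF k j']
  by (simp add: \<Phi>_apply[OF k j] \<Psi>_apply[OF k j] \<Phi>_apply[OF k j'] \<Psi>_apply[OF k j'])

lemma integrable_Z: "1 \<le> k \<Longrightarrow> 1 \<le> m \<Longrightarrow> integrable P (Z k m)"
  by (rule finite_measure.integrable_const_bound[where B="4^k"])
     (auto simp: Ztr_nonneg Ztr_le_four_pow prob_space.finite_measure[OF P])

lemma integral_Z_mult:
  assumes k: "1 \<le> k" and m: "1 \<le> m" "1 \<le> m'" "m \<noteq> m'"
  shows "(\<integral>\<omega>. Z k m \<omega> * Z k m' \<omega> \<partial>P) = (\<integral>\<omega>. Z k m \<omega> \<partial>P) * (\<integral>\<omega>. Z k m' \<omega> \<partial>P)"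
proof -
  interpret prob_space P by (rule P)
  define J where "J = {(k, m), (k, m')}"
  have "J \<subseteq> {(k, m). 1 \<le> k \<and> 1 \<le> m}" unfolding J_def using k m by auto
  then have "indep_vars (\<lambda>_. borel) (\<lambda>(k, m). X k m) J"
    by (rule indep_vars_subset[OF indep])
  then have ind: "indep_vars (\<lambda>_. borel) (\<lambda>i \<omega>. Ztr (fst i) (Ytr (fst i) ((\<lambda>(k, m). X k m) i \<omega>))) J"
    by (rule indep_vars_compose2) measurable
  have "(\<integral>\<omega>. (\<Prod>i\<in>J. Ztr (fst i) (Ytr (fst i) ((\<lambda>(k, m). X k m) i \<omega>))) \<partial>P)
      = (\<Prod>i\<in>J. \<integral>\<omega>. Ztr (fst i) (Ytr (fst i) ((\<lambda>(k, m). X k m) i \<omega>)) \<partial>P)"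
    by (rule indep_vars_lebesgue_integral[OF _ ind])
       (use integrable_Z[OF k m(1)] integrable_Z[OF k m(2)] in \<open>auto simp: J_def\<close>)
  moreover have "(k, m) \<noteq> (k, m')" using m by simp
  ultimately show ?thesis unfolding J_def by simp
qed

lemma integral_f_funpow_mult_uncorrelated:
  assumes k: "1 \<le> k" and j: "j < 2 * dseq k" and j': "j' < 2 * dseq k" and ne: "j \<noteq> j'"
  shows "(\<integral>x. f k ((T^^j) x) * f k ((T^^j') x) \<partial>M) = (\<integral>x. f k x \<partial>M)^2"
proof -
  have mean: "(\<integral>\<omega>. Z k (i + 1) \<omega> \<partial>P) = (\<integral>x. f k x \<partial>M)" if "i < 2 * dseq k" for i
    using integral_f_funpow_eq_integral_Z[OF k that, of "\<lambda>y. y"] integral_funpow_eq[OF f_measurable]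
    by simp
  have "(\<integral>x. f k ((T^^j) x) * f k ((T^^j') x) \<partial>M) = (\<integral>\<omega>. Z k (j + 1) \<omega> * Z k (j' + 1) \<omega> \<partial>P)"
    by (rule integral_f_funpow_mult_eq_integral_Z[OF k j j'])
  also have "\<dots> = (\<integral>\<omega>. Z k (j + 1) \<omega> \<partial>P) * (\<integral>\<omega>. Z k (j' + 1) \<omega> \<partial>P)"
    using ne by (intro integral_Z_mult k) auto
  finally show ?thesis using mean[OF j] mean[OF j'] by (simp add: power2_eq_square)
qed

lemma integral_f_sq_le:
  obtains K where "\<And>k. 1 \<le> k \<Longrightarrow> (\<integral>x. (f k x)^2 \<partial>M) \<le> K * 4 powr (real k * (2 - \<alpha>)) / real k"
proof -
  obtain K where K: "\<And>(Q :: 'b measure) \<xi> k. prob_space Q \<Longrightarrow>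
      has_stable_law Q \<xi> \<alpha> (real k powr (-1 / \<alpha>)) 1 0 \<Longrightarrow> 1 \<le> k \<Longrightarrow>
      (\<integral>\<omega>. (Ztr k (Ytr k (\<xi> \<omega>)))^2 \<partial>Q) \<le> K * 4 powr (real k * (2 - \<alpha>)) / real k"
    using truncated_stable_second_moment[OF alpha] by blast
  show thesis
  proof (rule that)
    fix k :: nat assume k: "1 \<le> k"
    have "0 < 2 * dseq k" using dseq_pos by simp
    then have "(\<integral>x. (f k x)^2 \<partial>M) = (\<integral>\<omega>. (Z k 1 \<omega>)^2 \<partial>P)"
      using integral_f_funpow_eq_integral_Z[OF k, of 0 "\<lambda>y. y^2"] by simp
    also have "\<dots> \<le> K * 4 powr (real k * (2 - \<alpha>)) / real k"
      by (rule K[OF P laws[OF k order_refl] k])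
    finally show "(\<integral>x. (f k x)^2 \<partial>M) \<le> K * 4 powr (real k * (2 - \<alpha>)) / real k" .
  qed
qed

lemma prob_space_M: "prob_space M"
  using ergodic_aperiodic_ppsD[OF sys] by simp

(* For k = 1 the window D_1 may exceed 2 d_1 = 8, so independence is not available
   and the crude bound is used instead. *)

lemma integral_birkhoff_sum_h_seq_sq_le_one:
  "(\<integral>x. (birkhoff_sum T n (h_seq \<alpha> T f 1) x)^2 \<partial>M) \<le> 4096"
proof -
  have "real (Dseq \<alpha> 1) \<le> 4 powr 2"
    using Dseq_le[of \<alpha> 1] powr_mono[of \<alpha> 2 4] alpha by simp
  then have D: "real (Dseq \<alpha> 1) * 4 \<le> 64" by simp
  have "(\<integral>x. (birkhoff_sum T n (h_seq \<alpha> T f 1) x)^2 \<partial>M) \<le> (real (Dseq \<alpha> 1) * 4^1)^2"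
    using alpha AE_f_funpow_range[of 1]
    by (intro integral_birkhoff_sum_h_seq_sq_le_crude prob_space_M T_measurable f_measurable Dseq_pos) auto
  also have "\<dots> \<le> 64^2"
    using D by (intro power_mono) auto
  finally show ?thesis by simp
qed

lemma integral_birkhoff_sum_h_seq_sq_le_f_sq:
  assumes k: "2 \<le> k"
  shows "(\<integral>x. (birkhoff_sum T n (h_seq \<alpha> T f k) x)^2 \<partial>M) \<le> 4 * 4 powr (\<alpha> * real k) * (\<integral>x. (f k x)^2 \<partial>M)"
proof -
  have D: "Dseq \<alpha> k \<le> 2 * dseq k" using alpha k by (intro Dseq_le_two_dseq) auto
  have "(\<integral>x. (birkhoff_sum T n (h_seq \<alpha> T f k) x)^2 \<partial>M) \<le> 4 * real (Dseq \<alpha> k) * (\<integral>x. (f k x)^2 \<partial>M)"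
  proof (rule integral_birkhoff_sum_h_seq_sq_le)
    show "distr M M T = M" using ergodic_aperiodic_ppsD[OF sys] by simp
    show "AE x in M. \<forall>j. 0 \<le> f k ((T^^j) x) \<and> f k ((T^^j) x) \<le> 4^k"
      using k by (intro AE_f_funpow_range) simp
    show "(\<integral>x. f k ((T^^i) x) * f k ((T^^i') x) \<partial>M) = (\<integral>x. f k x \<partial>M)^2"
      if "i < Dseq \<alpha> k" "i' < Dseq \<alpha> k" "i \<noteq> i'" for i i'
      using that D k by (intro integral_f_funpow_mult_uncorrelated) auto
  qed (use alpha in \<open>auto intro: prob_space_M Dseq_pos\<close>)
  also have "\<dots> \<le> 4 * 4 powr (\<alpha> * real k) * (\<integral>x. (f k x)^2 \<partial>M)"
    by (intro mult_right_mono mult_left_mono Dseq_le integral_nonneg) auto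
  finally show ?thesis .
qed

lemma birkhoff_sum_h_seq_second_moment_le:
  obtains C where "0 \<le> C"
    and "\<And>k n. 1 \<le> k \<Longrightarrow> (\<integral>x. (birkhoff_sum T n (h_seq \<alpha> T f k) x)^2 \<partial>M) \<le> C * 16^k / real k"
proof -
  obtain K where K: "\<And>k. 1 \<le> k \<Longrightarrow> (\<integral>x. (f k x)^2 \<partial>M) \<le> K * 4 powr (real k * (2 - \<alpha>)) / real k"
    using integral_f_sq_le by blast
  define C where "C = max (4 * K) 256"
  have pow: "4 powr (\<alpha> * real k) * 4 powr (real k * (2 - \<alpha>)) = (16::real)^k" for k :: nat
  proof -
    have "4 powr (\<alpha> * real k) * 4 powr (real k * (2 - \<alpha>)) = 4 powr real (2 * k)"
      by (simp add: powr_add[symmetric] algebra_simps)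
    also have "\<dots> = 4^(2*k)" by (rule powr_realpow) simp
    finally show ?thesis by (simp add: power_mult)
  qed
  have "(\<integral>x. (birkhoff_sum T n (h_seq \<alpha> T f k) x)^2 \<partial>M) \<le> C * 16^k / real k" if k: "1 \<le> k" for k n
  proof (cases "k = 1")
    case True
    then show ?thesis using integral_birkhoff_sum_h_seq_sq_le_one[of n] by (simp add: C_def)
  next
    case False
    have "(\<integral>x. (birkhoff_sum T n (h_seq \<alpha> T f k) x)^2 \<partial>M) \<le> 4 * 4 powr (\<alpha> * real k) * (\<integral>x. (f k x)^2 \<partial>M)"
      using False k by (intro integral_birkhoff_sum_h_seq_sq_le_f_sq) simp
    also have "\<dots> \<le> 4 * 4 powr (\<alpha> * real k) * (K * 4 powr (real k * (2 - \<alpha>)) / real k)"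
      using K[OF k] by (intro mult_left_mono) auto
    also have "\<dots> = 4 * K * 16^k / real k"
      by (simp add: pow[symmetric] algebra_simps)
    also have "\<dots> \<le> C * 16^k / real k"
      unfolding C_def by (intro divide_right_mono mult_right_mono) auto
    finally show ?thesis .
  qed
  moreover have "0 \<le> C" unfolding C_def by simp
  ultimately show thesis using that by blast
qed

lemma ae_bounded_birkhoff_sum_h_seq:
  assumes k: "1 \<le> k"
  shows "ae_bounded M (birkhoff_sum T n (h_seq \<alpha> T f k))"
proof -
  note Tn = measurable_compose_n[OF T_measurable]
  have "ae_bounded M (\<lambda>x. f k ((T^^i) x))" for i
    unfolding ae_bounded_def
  proof
    show "(\<lambda>x. f k ((T^^i) x)) \<in> borel_measurable M" using Tn[of i] by measurable
    show "\<exists>B. AE x in M. \<bar>f k ((T^^i) x)\<bar> \<le> B"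
      using AE_f_funpow_range[OF k] by (intro exI[of _ "4^k"]) (auto elim!: eventually_mono)
  qed
  then have "ae_bounded M (cesaro_potential \<alpha> T f k)"
    unfolding cesaro_potential_def[abs_def] birkhoff_sum_def by (intro ae_bounded_cmult ae_bounded_sum)
  moreover have "0 < Dseq \<alpha> k" using alpha by (intro Dseq_pos) simp
  then have "birkhoff_sum T n (h_seq \<alpha> T f k)
      = (\<lambda>x. cesaro_potential \<alpha> T f k x - cesaro_potential \<alpha> T f k ((T^^n) x))"
    by (intro ext birkhoff_sum_h_seq_eq)
  ultimately show ?thesis
    by (simp only:) (intro ae_bounded_diff ae_bounded_compose[OF Tn distr_T_funpow])
qed

lemma integral_abs_birkhoff_sum_h_seq_le:
  assumes C: "\<And>k. 1 \<le> k \<Longrightarrow> (\<integral>x. (birkhoff_sum T n (h_seq \<alpha> T f k) x)^2 \<partial>M) \<le> C * 16^k / real k"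
    and k: "1 \<le> k"
  shows "(\<integral>x. \<bar>birkhoff_sum T n (h_seq \<alpha> T f k) x\<bar> \<partial>M) \<le> sqrt C * (4^k / sqrt (real k))"
proof -
  have S: "ae_bounded M (birkhoff_sum T n (h_seq \<alpha> T f k))"
    by (rule ae_bounded_birkhoff_sum_h_seq[OF k])
  have fin: "finite_measure M" using prob_space_M by (rule prob_space.finite_measure)
  have "(\<integral>x. \<bar>birkhoff_sum T n (h_seq \<alpha> T f k) x\<bar> \<partial>M) \<le> sqrt (\<integral>x. (birkhoff_sum T n (h_seq \<alpha> T f k) x)^2 \<partial>M)"
    by (intro integral_abs_le_sqrt_integral_sq prob_space_M ae_bounded_integrable[OF fin]
        S ae_bounded_power2)
  also have "\<dots> \<le> sqrt (C * 16^k / real k)"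
    by (intro real_sqrt_le_mono C k)
  also have "(16::real)^k = (4^k)^2"
    by (simp add: power2_eq_square flip: power_mult_distrib)
  then have "sqrt ((16::real)^k) = 4^k" by simp
  then have "sqrt (C * 16^k / real k) = sqrt C * (4^k / sqrt (real k))"
    by (simp add: real_sqrt_mult real_sqrt_divide)
  finally show ?thesis .
qed

lemma integral_abs_normalized_sum_le:
  assumes C: "0 \<le> C" "\<And>k. 1 \<le> k \<Longrightarrow> (\<integral>x. (birkhoff_sum T n (h_seq \<alpha> T f k) x)^2 \<partial>M) \<le> C * 16^k / real k"
    and n: "1 \<le> n" and N: "N = nat \<lfloor>log 2 (real n) / (2 * \<alpha>)\<rfloor>" "1 \<le> N"
  shows "(\<integral>x. \<bar>real n powr (-1 / \<alpha>) * (\<Sum>k\<in>{1..N}. birkhoff_sum T n (h_seq \<alpha> T f k) x)\<bar> \<partial>M)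
           \<le> 2 * sqrt C / sqrt (real N)"
proof -
  define S where "S k = birkhoff_sum T n (h_seq \<alpha> T f k)" for k
  define c where "c = real n powr (-1 / \<alpha>)"
  have fin: "finite_measure M" using prob_space_M by (rule prob_space.finite_measure)
  have bS: "ae_bounded M (S k)" if "k \<in> {1..N}" for k
    unfolding S_def using that by (intro ae_bounded_birkhoff_sum_h_seq) auto
  have c0: "0 \<le> c" unfolding c_def by simp
  have "(\<integral>x. \<bar>c * (\<Sum>k\<in>{1..N}. S k x)\<bar> \<partial>M) \<le> (\<integral>x. c * (\<Sum>k\<in>{1..N}. \<bar>S k x\<bar>) \<partial>M)"
  proof (rule integral_mono)
    show "integrable M (\<lambda>x. \<bar>c * (\<Sum>k\<in>{1..N}. S k x)\<bar>)"
      by (intro ae_bounded_integrable[OF fin] ae_bounded_abs ae_bounded_cmult ae_bounded_sum bS)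
    show "integrable M (\<lambda>x. c * (\<Sum>k\<in>{1..N}. \<bar>S k x\<bar>))"
      by (intro ae_bounded_integrable[OF fin] ae_bounded_cmult ae_bounded_sum ae_bounded_abs bS)
    show "\<bar>c * (\<Sum>k\<in>{1..N}. S k x)\<bar> \<le> c * (\<Sum>k\<in>{1..N}. \<bar>S k x\<bar>)" for x
      using c0 by (simp add: abs_mult mult_left_mono sum_abs)
  qed
  also have "\<dots> = c * (\<Sum>k\<in>{1..N}. \<integral>x. \<bar>S k x\<bar> \<partial>M)"
    using bS by (simp add: ae_bounded_integrable[OF fin] ae_bounded_abs Bochner_Integration.integral_sum)
  also have "\<dots> \<le> c * (\<Sum>k\<in>{1..N}. sqrt C * (4^k / sqrt (real k)))"
    unfolding S_def using c0 by (intro mult_left_mono sum_mono integral_abs_birkhoff_sum_h_seq_le C) auto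
  also have "\<dots> \<le> c * sqrt C * (2 * 4^N / sqrt (real N))"
    using c0 C N by (simp only: sum_distrib_left[symmetric] mult.assoc)
      (intro mult_left_mono sum_four_pow_div_sqrt_le, auto)
  also have "\<dots> \<le> c * sqrt C * (2 * real n powr (1 / \<alpha>) / sqrt (real N))"
    using c0 C N alpha four_pow_nat_floor_log_le[of \<alpha> n] n
    by (intro mult_left_mono divide_right_mono) auto
  also have "\<dots> = 2 * sqrt C / sqrt (real N)"
    using n by (simp add: c_def powr_add[symmetric])
  finally show ?thesis unfolding S_def c_def .
qed

lemma prob_normalized_sum_gt_le:
  assumes C: "0 \<le> C" "\<And>k. 1 \<le> k \<Longrightarrow> (\<integral>x. (birkhoff_sum T n (h_seq \<alpha> T f k) x)^2 \<partial>M) \<le> C * 16^k / real k"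
    and n: "1 \<le> n" and N: "1 \<le> nat \<lfloor>log 2 (real n) / (2 * \<alpha>)\<rfloor>" and e: "0 < \<epsilon>"
  shows "measure M {x \<in> space M. \<bar>real n powr (-1 / \<alpha>) *
           (\<Sum>k\<in>{k. 1 \<le> k \<and> real k \<le> log 2 (real n) / (2 * \<alpha>)}. birkhoff_sum T n (h_seq \<alpha> T f k) x) - 0\<bar> > \<epsilon>}
         \<le> 2 * sqrt C / \<epsilon> / sqrt (real (nat \<lfloor>log 2 (real n) / (2 * \<alpha>)\<rfloor>))"
proof -
  define N where "N = nat \<lfloor>log 2 (real n) / (2 * \<alpha>)\<rfloor>"
  define Y where "Y x = real n powr (-1 / \<alpha>) * (\<Sum>k\<in>{1..N}. birkhoff_sum T n (h_seq \<alpha> T f k) x)" for x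
  have fin: "finite_measure M" using prob_space_M by (rule prob_space.finite_measure)
  have bY: "ae_bounded M (\<lambda>x. \<bar>Y x\<bar>)"
    unfolding Y_def by (intro ae_bounded_abs ae_bounded_cmult ae_bounded_sum ae_bounded_birkhoff_sum_h_seq) auto
  have "measure M {x \<in> space M. \<bar>Y x - 0\<bar> > \<epsilon>} \<le> measure M {x \<in> space M. \<epsilon> \<le> \<bar>Y x\<bar>}"
    using bY unfolding ae_bounded_def by (intro finite_measure.finite_measure_mono[OF fin]) auto
  also have "\<dots> \<le> (\<integral>x. \<bar>Y x\<bar> \<partial>M) / \<epsilon>"
    using ae_bounded_integrable[OF fin bY] e by (intro integral_Markov_inequality_measure[where A="space M"]) auto
  also have "\<dots> \<le> 2 * sqrt C / sqrt (real N) / \<epsilon>"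
    unfolding Y_def using C n N e by (intro divide_right_mono integral_abs_normalized_sum_le) (auto simp: N_def)
  finally show ?thesis
    unfolding Collect_le_real_eq_atLeastAtMost by (simp add: Y_def N_def field_simps)
qed

end

theorem lemma5p6:
  fixes M :: "'a measure" and T :: "'a \<Rightarrow> 'a"
    and P :: "'b measure" and X :: "nat \<Rightarrow> nat \<Rightarrow> 'b \<Rightarrow> real"
    and f :: "nat \<Rightarrow> 'a \<Rightarrow> real" and \<alpha> :: real
  assumes sys: "ergodic_aperiodic_pps M T"
    and alpha: "1 < \<alpha>" "\<alpha> < 2"
    and P: "prob_space P"
    and indep: "prob_space.indep_vars P (\<lambda>_. borel) (\<lambda>(k, m). X k m) {(k, m). 1 \<le> k \<and> 1 \<le> m}"
    and laws: "\<And>k m. 1 \<le> k \<Longrightarrow> 1 \<le> m \<Longrightarrow> has_stable_law P (X k m) \<alpha> (real k powr (-1 / \<alpha>)) 1 0"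
    and adm: "admissible M T P X f"
  shows "tendsto_in_prob M
           (\<lambda>n x. real n powr (-1 / \<alpha>) *
              (\<Sum>k\<in>{k. 1 \<le> k \<and> real k \<le> log 2 (real n) / (2 * \<alpha>)}. birkhoff_sum T n (h_seq \<alpha> T f k) x)) 0"
proof -
  interpret admissible_stable_system M T P X f \<alpha>
    by (rule admissible_stable_system.intro[OF sys alpha P indep laws adm])
  obtain C where C: "0 \<le> C"
    "\<And>k n. 1 \<le> k \<Longrightarrow> (\<integral>x. (birkhoff_sum T n (h_seq \<alpha> T f k) x)^2 \<partial>M) \<le> C * 16^k / real k"
    using birkhoff_sum_h_seq_second_moment_le by blast
  define N where "N n = real (nat \<lfloor>log 2 (real n) / (2 * \<alpha>)\<rfloor>)" for n :: nat
  have N: "filterlim N at_top sequentially"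
    unfolding N_def using alpha by (intro filterlim_nat_floor_log_at_top) simp
  show ?thesis
  proof (rule tendsto_in_prob_if_eventually_le[where g="\<lambda>\<epsilon> n. 2 * sqrt C / \<epsilon> / sqrt (N n)"])
    show "(\<lambda>n. 2 * sqrt C / \<epsilon> / sqrt (N n)) \<longlonglongrightarrow> 0" for \<epsilon>
      by (intro tendsto_divide_0[OF tendsto_const] filterlim_at_top_imp_at_infinity
          filterlim_compose[OF sqrt_at_top N])
    have "eventually (\<lambda>n. 1 \<le> N n) sequentially"
      using N by (simp add: filterlim_at_top)
    then have "eventually (\<lambda>n. 1 \<le> n \<and> 1 \<le> N n) sequentially"
      by (intro eventually_conj eventually_ge_at_top)
    then show "eventually (\<lambda>n. measure M {x \<in> space M. \<bar>real n powr (-1 / \<alpha>) *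
          (\<Sum>k\<in>{k. 1 \<le> k \<and> real k \<le> log 2 (real n) / (2 * \<alpha>)}. birkhoff_sum T n (h_seq \<alpha> T f k) x) - 0\<bar> > \<epsilon>}
        \<le> 2 * sqrt C / \<epsilon> / sqrt (N n)) sequentially" if "0 < \<epsilon>" for \<epsilon>
      by eventually_elim (use prob_normalized_sum_gt_le[OF C _ _ that] in \<open>simp add: N_def\<close>)
  qed
qed

end
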